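(* For every $n\ge 0$, $$\mathsf{Pop}(\mathrm{Tam}_{n+1};q)=\sum_{k=0}^{\lfloor n/2\rfloor}\frac{1}{k+1}\binom{2k}{k}\binom{n}{2k}q^{\,n-k}.$$ In particular, setting $q=1$, for every $n\ge 1$ the image $\mathsf{Pop}_{\mathrm{Tam}_n}(\mathrm{Tam}_n)$ has exactly $M_{n-1}$ elements, where $M_m=\sum_{k\ge 0}\binom{m}{2k}C_k$ is the $m$-th Motzkin number ($C_k$ the Catalan numbers).
   Context: For a finite lattice $L$, $\mathsf{Pop}_L(x)=\bigwedge(\{y\in L: y\lessdot x\}\cup\{x\})$, where $y\lessdot x$ means $x$ covers $y$. For $b\in L$, $\mathscr{U}_L(b)$ is the set of elements of $L$ that cover $b$, and $\mathsf{Pop}(L;q)=\sum_{b\in\mathsf{Pop}_L(L)}q^{|\mathscr{U}_L(b)|}$. $\mathrm{Tam}_n$ is the $n$-th Tamari lattice (on Dyck paths of semilength $n$); equivalently it is isomorphic to the lattice $\mathrm{Av}_n(312)$ of $312$-avoiding permutations of $[n]$ under the right weak order (in which $y\lessdot x$ iff $y$ is obtained from $x$ by swapping two adjacent entries $x_i>x_{i+1}$). *)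

theory Defs
  imports Complex_Main
begin

definition covers :: "'a set \<Rightarrow> ('a \<Rightarrow> 'a \<Rightarrow> bool) \<Rightarrow> 'a \<Rightarrow> 'a \<Rightarrow> bool" where
  "covers L le y x \<longleftrightarrow> y \<in> L \<and> x \<in> L \<and> le y x \<and> y \<noteq> x \<and>
     \<not> (\<exists>z\<in>L. le y z \<and> le z x \<and> z \<noteq> y \<and> z \<noteq> x)"

definition is_glb :: "'a set \<Rightarrow> ('a \<Rightarrow> 'a \<Rightarrow> bool) \<Rightarrow> 'a set \<Rightarrow> 'a \<Rightarrow> bool" where
  "is_glb L le S m \<longleftrightarrow> m \<in> L \<and> (\<forall>s\<in>S. le m s) \<and> (\<forall>z\<in>L. (\<forall>s\<in>S. le z s) \<longrightarrow> le z m)"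

definition meet :: "'a set \<Rightarrow> ('a \<Rightarrow> 'a \<Rightarrow> bool) \<Rightarrow> 'a set \<Rightarrow> 'a" where
  "meet L le S = (THE m. is_glb L le S m)"

definition Pop :: "'a set \<Rightarrow> ('a \<Rightarrow> 'a \<Rightarrow> bool) \<Rightarrow> 'a \<Rightarrow> 'a" where
  "Pop L le x = meet L le ({y. covers L le y x} \<union> {x})"

definition upcovers :: "'a set \<Rightarrow> ('a \<Rightarrow> 'a \<Rightarrow> bool) \<Rightarrow> 'a \<Rightarrow> 'a set" where
  "upcovers L le b = {x. covers L le b x}"

definition Pop_poly :: "'a set \<Rightarrow> ('a \<Rightarrow> 'a \<Rightarrow> bool) \<Rightarrow> real \<Rightarrow> real" where
  "Pop_poly L le q = (\<Sum>b\<in>Pop L le ` L. q ^ card (upcovers L le b))"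

definition perms :: "nat \<Rightarrow> nat list set" where
  "perms n = {xs. distinct xs \<and> set xs = {1..n}}"

definition avoids312 :: "nat list \<Rightarrow> bool" where
  "avoids312 xs \<longleftrightarrow> \<not> (\<exists>i j k. i < j \<and> j < k \<and> k < length xs \<and> xs ! j < xs ! k \<and> xs ! k < xs ! i)"

definition Tam :: "nat \<Rightarrow> nat list set" where
  "Tam n = {xs \<in> perms n. avoids312 xs}"

text \<open>(Left) inversion set by values: pairs (a,b), a<b, with b occurring before a.
  The right weak order is containment of these sets; its cover relations are
  swaps of adjacent descents.\<close>
definition invs :: "nat list \<Rightarrow> (nat \<times> nat) set" where
  "invs xs = {(a, b). a < b \<and> (\<exists>i j. i < j \<and> j < length xs \<and> xs ! i = b \<and> xs ! j = a)}"

definition weak_le :: "nat list \<Rightarrow> nat list \<Rightarrow> bool" where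
  "weak_le xs ys \<longleftrightarrow> invs xs \<subseteq> invs ys"

definition catalan :: "nat \<Rightarrow> nat" where
  "catalan k = ((2 * k) choose k) div (k + 1)"

definition motzkin :: "nat \<Rightarrow> nat" where
  "motzkin m = (\<Sum>k\<le>m. (m choose (2 * k)) * catalan k)"

end

theory Submission
  imports Defs "HOL-Computational_Algebra.Formal_Power_Series"
begin

text \<open>The values larger than a that precede a in a 312-avoiding permutation form an
  interval a + 1, \<dots>, a + r a, and these intervals [a, a + r a] are nested or disjoint; this
  identifies Tam_N with such bracket vectors r under the componentwise order. A lower cover of r
  shrinks one interval [a, a + r a] to end just before the longest proper subinterval sharing its
  right end, so Pop shrinks all intervals at once. Its image consists of the vectors on
  1, \<dots>, N - 1 in which no nonempty interval shares its right end with an enclosing one; such a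
  vector with k nonempty intervals has N - 1 - k upper covers. Decomposing at position 1 as for
  Motzkin paths, these vectors on n positions with k nonempty intervals are counted by
  binomial n (2 k) times the k-th Catalan number.\<close>

section \<open>Catalan numbers\<close>

lemma Suc_times_catalan: "Suc k * catalan k = (2 * k) choose k"
proof -
  have "Suc k * ((2 * k) choose Suc k) = k * ((2 * k) choose k)"
    using Suc_times_binomial_add[of k "k - 1"] by (cases k) (simp_all add: mult_2)
  then have eq: "(2 * k) choose k = Suc k * (((2 * k) choose k) - ((2 * k) choose Suc k))"
    by (simp add: diff_mult_distrib2)
  then have "catalan k = ((2 * k) choose k) - ((2 * k) choose Suc k)"
    unfolding catalan_def by (metis Suc_eq_plus1 nonzero_mult_div_cancel_left Suc_neq_Zero)
  then show ?thesis using eq by simp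
qed

lemma catalan_Suc_rec: "(k + 2) * catalan (Suc k) = 2 * (2 * k + 1) * catalan k"
proof -
  have sym: "Suc (2 * k) choose Suc k = Suc (2 * k) choose k"
    using Suc_times_binomial_add[of k k] mult_2[of k] by (metis mult_left_cancel nat.distinct(1))
  have "Suc k * (Suc k * ((2 * Suc k) choose Suc k)) = Suc k * (Suc (Suc (2 * k)) * (Suc (2 * k) choose k))"
    using Suc_times_binomial[of k "Suc (2 * k)"] by (simp del: binomial_Suc_Suc)
  also have "\<dots> = 2 * Suc k * (Suc k * (Suc (2 * k) choose Suc k))"
    by (simp del: binomial_Suc_Suc add: sym)
  also have "\<dots> = 2 * Suc k * (Suc (2 * k) * ((2 * k) choose k))"
    using Suc_times_binomial[of k "2 * k"] by (simp del: binomial_Suc_Suc)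
  also have "\<dots> = Suc k * (2 * (2 * k + 1) * ((2 * k) choose k))"
    by simp
  finally have "Suc k * ((2 * Suc k) choose Suc k) = 2 * (2 * k + 1) * ((2 * k) choose k)"
    by (metis mult_cancel1 Zero_not_Suc)
  then have "Suc k * ((k + 2) * catalan (Suc k)) = 2 * (2 * k + 1) * (Suc k * catalan k)"
    by (simp only: Suc_times_catalan add_2_eq_Suc')
  then have "Suc k * ((k + 2) * catalan (Suc k)) = Suc k * (2 * (2 * k + 1) * catalan k)"
    by (simp only: ac_simps)
  then show ?thesis
    by (metis mult_cancel1 Zero_not_Suc)
qed

lemma gbinomial_half_catalan:
  "((1/2::real) gchoose Suc k) * (-4) ^ Suc k = - 2 * real (catalan k)"
proof (induction k)
  case 0
  show ?case by (simp add: catalan_def)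
next
  case (Suc k)
  have step: "((1/2::real) gchoose Suc (Suc k))
      = ((1/2) gchoose Suc k) * (1/2 - real (Suc k)) / real (Suc (Suc k))"
    by (metis gbinomial_absorb_comp gbinomial_absorption mult.commute
        nonzero_mult_div_cancel_left of_nat_neq_0)
  have "real (k + 2) * real (catalan (Suc k)) = real (2 * (2 * k + 1)) * real (catalan k)"
    using catalan_Suc_rec[of k] by (metis of_nat_mult)
  then have "real (catalan (Suc k)) = (4 * real k + 2) / (real k + 2) * real (catalan k)"
    by (simp add: field_simps)
  with Suc show ?case
    by (simp add: step field_simps)
qed

lemma catalan_convolution: "(\<Sum>i\<le>k. catalan i * catalan (k - i)) = catalan (Suc k)"
proof -
  \<comment> \<open>s j is the j-th coefficient of sqrt (1 - 4 x), whose square 1 - 4 x has no terms of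
    degree \<ge> 2; this is Vandermonde's identity for 1/2 + 1/2 = 1.\<close>
  define s where "s j = ((1/2::real) gchoose j) * (-4) ^ j" for j
  have s_0: "s 0 = 1" by (simp add: s_def)
  have s_Suc: "s (Suc i) = - 2 * real (catalan i)" for i
    using gbinomial_half_catalan by (simp add: s_def)
  have "(\<Sum>j\<le>Suc (Suc k). s j * s (Suc (Suc k) - j))
      = (-4) ^ Suc (Suc k) * (\<Sum>j\<le>Suc (Suc k). ((1/2::real) gchoose j) * ((1/2) gchoose (Suc (Suc k) - j)))"
    unfolding sum_distrib_left
    by (intro sum.cong refl) (simp add: s_def power_add[symmetric])
  also have "(\<Sum>j\<le>Suc (Suc k). ((1/2::real) gchoose j) * ((1/2) gchoose (Suc (Suc k) - j))) = 1 gchoose Suc (Suc k)"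
    using gbinomial_Vandermonde[of "1/2::real" "1/2" "Suc (Suc k)"] by (simp add: atLeast0AtMost)
  also have "(1::real) gchoose Suc (Suc k) = 0"
    using binomial_gbinomial[of 1 "Suc (Suc k)", where 'a=real] by simp
  finally have vanish: "(\<Sum>j\<le>Suc (Suc k). s j * s (Suc (Suc k) - j)) = 0" by simp
  have "(\<Sum>j\<le>Suc (Suc k). s j * s (Suc (Suc k) - j))
      = s 0 * s (Suc (Suc k)) + (\<Sum>i\<le>k. s (Suc i) * s (Suc (Suc k) - Suc i)) + s (Suc (Suc k)) * s 0"
    by (simp only: sum.atMost_Suc_shift[where n = "Suc k"] sum.atMost_Suc[where n = k]
        diff_Suc_Suc diff_self_eq_0 diff_zero add.assoc)
  also have "(\<Sum>i\<le>k. s (Suc i) * s (Suc (Suc k) - Suc i)) = (\<Sum>i\<le>k. s (Suc i) * s (Suc (k - i)))"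
    by (intro sum.cong refl) (simp add: Suc_diff_le)
  finally have "0 = - 4 * real (catalan (Suc k)) + 4 * (\<Sum>i\<le>k. real (catalan i) * real (catalan (k - i)))"
    using vanish by (simp add: s_0 s_Suc sum_distrib_left)
  then show ?thesis
    by (simp flip: of_nat_mult of_nat_sum)
qed

section \<open>Invariance of Pop under order isomorphisms\<close>

context
  fixes f :: "'a \<Rightarrow> 'b" and L :: "'a set" and le :: "'a \<Rightarrow> 'a \<Rightarrow> bool"
    and L' :: "'b set" and le' :: "'b \<Rightarrow> 'b \<Rightarrow> bool"
  assumes bij: "bij_betw f L L'"
    and order_iso: "\<And>x y. x \<in> L \<Longrightarrow> y \<in> L \<Longrightarrow> le x y \<longleftrightarrow> le' (f x) (f y)"
begin

lemma iso_inj: "x \<in> L \<Longrightarrow> y \<in> L \<Longrightarrow> f x = f y \<longleftrightarrow> x = y"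
  using bij by (auto simp: bij_betw_def dest: inj_onD)

lemma iso_into: "x \<in> L \<Longrightarrow> f x \<in> L'"
  using bij by (auto simp: bij_betw_def)

lemma iso_onto: "x' \<in> L' \<Longrightarrow> \<exists>x\<in>L. x' = f x"
  using bij by (auto simp: bij_betw_def)

lemma covers_iso:
  assumes "x \<in> L" "y \<in> L"
  shows "covers L le y x \<longleftrightarrow> covers L' le' (f y) (f x)"
proof -
  have "(\<exists>z\<in>L. le y z \<and> le z x \<and> z \<noteq> y \<and> z \<noteq> x) \<longleftrightarrow>
        (\<exists>z'\<in>L'. le' (f y) z' \<and> le' z' (f x) \<and> z' \<noteq> f y \<and> z' \<noteq> f x)"
  proof
    assume "\<exists>z\<in>L. le y z \<and> le z x \<and> z \<noteq> y \<and> z \<noteq> x"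
    then show "\<exists>z'\<in>L'. le' (f y) z' \<and> le' z' (f x) \<and> z' \<noteq> f y \<and> z' \<noteq> f x"
      using assms order_iso iso_inj iso_into by blast
  next
    assume "\<exists>z'\<in>L'. le' (f y) z' \<and> le' z' (f x) \<and> z' \<noteq> f y \<and> z' \<noteq> f x"
    then obtain z where "z \<in> L" "le' (f y) (f z)" "le' (f z) (f x)" "f z \<noteq> f y" "f z \<noteq> f x"
      using iso_onto by blast
    then show "\<exists>z\<in>L. le y z \<and> le z x \<and> z \<noteq> y \<and> z \<noteq> x"
      using assms order_iso by blast
  qed
  then show ?thesis
    unfolding covers_def using assms order_iso[OF assms(2,1)] iso_inj iso_into by blast
qed

lemma covers_image_iso:
  assumes x: "x \<in> L"
  shows "f ` {y. covers L le y x} = {y'. covers L' le' y' (f x)}"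
    and "f ` upcovers L le x = upcovers L' le' (f x)"
proof -
  have L: "covers L le y x \<Longrightarrow> y \<in> L" "covers L le x y \<Longrightarrow> y \<in> L" for y
    by (simp_all add: covers_def)
  have L': "\<exists>y\<in>L. y' = f y" if "covers L' le' y' (f x) \<or> covers L' le' (f x) y'" for y'
    using that iso_onto by (auto simp: covers_def)
  show "f ` {y. covers L le y x} = {y'. covers L' le' y' (f x)}"
    using covers_iso[OF x] L(1) L' by fastforce
  show "f ` upcovers L le x = upcovers L' le' (f x)"
    unfolding upcovers_def using covers_iso[OF _ x] L(2) L' by fastforce
qed

lemma is_glb_iso:
  assumes S: "S \<subseteq> L" and m: "m \<in> L"
  shows "is_glb L le S m \<longleftrightarrow> is_glb L' le' (f ` S) (f m)"
proof
  assume g: "is_glb L le S m"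
  show "is_glb L' le' (f ` S) (f m)"
    unfolding is_glb_def
  proof (intro conjI ballI impI)
    show "f m \<in> L'" using m by (rule iso_into)
    show "le' (f m) s'" if "s' \<in> f ` S" for s'
      using that g S m order_iso unfolding is_glb_def by blast
    fix z' assume z': "z' \<in> L'" "\<forall>s'\<in>f ` S. le' z' s'"
    then obtain z where "z \<in> L" "z' = f z" using iso_onto by blast
    moreover have "\<forall>s\<in>S. le z s"
      using z' S \<open>z \<in> L\<close> \<open>z' = f z\<close> order_iso by blast
    ultimately show "le' z' (f m)"
      using g m order_iso unfolding is_glb_def by blast
  qed
next
  assume g: "is_glb L' le' (f ` S) (f m)"
  show "is_glb L le S m"
    unfolding is_glb_def
  proof (intro conjI ballI impI)
    show "m \<in> L" by (rule m)
    show "le m s" if "s \<in> S" for s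
    proof -
      have "le' (f m) (f s)" using g that unfolding is_glb_def by blast
      then show ?thesis using order_iso m S that by blast
    qed
    fix z assume z: "z \<in> L" "\<forall>s\<in>S. le z s"
    then have "\<forall>s'\<in>f ` S. le' (f z) s'" using S order_iso by blast
    then have "le' (f z) (f m)" using g iso_into[OF z(1)] unfolding is_glb_def by blast
    then show "le z m" using order_iso z(1) m by blast
  qed
qed

context
  assumes glb_unique: "\<And>x'. x' \<in> L' \<Longrightarrow> \<exists>!m'. is_glb L' le' ({y'. covers L' le' y' x'} \<union> {x'}) m'"
begin

lemma Pop_iso:
  assumes x: "x \<in> L"
  shows "Pop L le x \<in> L" and "f (Pop L le x) = Pop L' le' (f x)"
proof -
  let ?S = "{y. covers L le y x} \<union> {x}"
  have S: "?S \<subseteq> L" using x by (auto simp: covers_def)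
  have fS: "f ` ?S = {y'. covers L' le' y' (f x)} \<union> {f x}"
    using covers_image_iso(1)[OF x] by auto
  obtain m' where m': "is_glb L' le' (f ` ?S) m'"
    and uq: "\<And>m''. is_glb L' le' (f ` ?S) m'' \<Longrightarrow> m'' = m'"
    using glb_unique[OF iso_into[OF x]] unfolding fS by blast
  have "m' \<in> L'" using m' by (simp add: is_glb_def)
  then obtain m where m: "m \<in> L" "m' = f m" using iso_onto by blast
  have glb_m: "is_glb L le ?S n \<longleftrightarrow> n = m" for n
  proof
    assume "is_glb L le ?S n"
    moreover from this have "n \<in> L" by (simp add: is_glb_def)
    ultimately have "f n = f m" using is_glb_iso[OF S] uq m by blast
    then show "n = m" using iso_inj \<open>n \<in> L\<close> m(1) by blast
  qed (use is_glb_iso[OF S] m m' in blast)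
  then have "Pop L le x = m"
    unfolding Pop_def meet_def by (intro the_equality) simp_all
  moreover have "Pop L' le' (f x) = m'"
    unfolding Pop_def meet_def fS[symmetric] using m' uq by (rule the_equality)
  ultimately show "Pop L le x \<in> L" "f (Pop L le x) = Pop L' le' (f x)"
    using m by simp_all
qed

lemma Pop_image_iso: "Pop L' le' ` L' = f ` Pop L le ` L"
proof -
  have "f ` Pop L le ` L = Pop L' le' ` f ` L"
    unfolding image_image using Pop_iso(2) by (rule image_cong[OF refl])
  then show ?thesis using bij by (simp add: bij_betw_def)
qed

lemma card_Pop_image_iso: "card (Pop L' le' ` L') = card (Pop L le ` L)"
  unfolding Pop_image_iso
  by (rule card_image, rule inj_on_subset[of _ L]) (use bij Pop_iso(1) in \<open>auto simp: bij_betw_def\<close>)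

lemma Pop_poly_iso: "Pop_poly L' le' q = Pop_poly L le q"
proof -
  have inj: "inj_on f (Pop L le ` L)"
    using bij Pop_iso(1) by (auto simp: bij_betw_def intro: inj_on_subset)
  have "card (upcovers L' le' (f b)) = card (upcovers L le b)" if "b \<in> L" for b
    using covers_image_iso(2)[OF that] inj_on_subset[of f L "upcovers L le b"] bij
    by (metis (no_types, lifting) bij_betw_def card_image covers_def mem_Collect_eq subsetI upcovers_def)
  then show ?thesis
    unfolding Pop_poly_def Pop_image_iso sum.reindex[OF inj] comp_def
    using Pop_iso(1) by (intro sum.cong) auto
qed

end

end

section \<open>Inversion sets of 312-avoiding permutations\<close>

definition precedes :: "'a list \<Rightarrow> 'a \<Rightarrow> 'a \<Rightarrow> bool" where
  "precedes xs u v \<longleftrightarrow> (\<exists>i j. i < j \<and> j < length xs \<and> xs ! i = u \<and> xs ! j = v)"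

lemma invs_precedes: "invs xs = {(a, b). a < b \<and> precedes xs b a}"
  by (auto simp: invs_def precedes_def)

lemma precedes_Nil [simp]: "\<not> precedes [] u v"
  by (simp add: precedes_def)

lemma precedes_Cons: "precedes (x # xs) u v \<longleftrightarrow> (u = x \<and> v \<in> set xs) \<or> precedes xs u v"
proof
  assume "precedes (x # xs) u v"
  then obtain i j where ij: "i < j" "j < length (x # xs)" "(x # xs) ! i = u" "(x # xs) ! j = v"
    unfolding precedes_def by blast
  then obtain j' where j: "j = Suc j'" by (cases j) auto
  show "(u = x \<and> v \<in> set xs) \<or> precedes xs u v"
  proof (cases i)
    case 0
    then show ?thesis using ij j by auto
  next
    case (Suc i')
    then have "precedes xs u v"
      unfolding precedes_def using ij j by (intro exI[of _ i'] exI[of _ j']) auto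
    then show ?thesis by simp
  qed
next
  assume "(u = x \<and> v \<in> set xs) \<or> precedes xs u v"
  then show "precedes (x # xs) u v"
  proof
    assume "u = x \<and> v \<in> set xs"
    then obtain j where "j < length xs" "xs ! j = v" "u = x" by (auto simp: in_set_conv_nth)
    then show ?thesis unfolding precedes_def by (intro exI[of _ 0] exI[of _ "Suc j"]) auto
  next
    assume "precedes xs u v"
    then obtain i j where "i < j" "j < length xs" "xs ! i = u" "xs ! j = v"
      unfolding precedes_def by blast
    then show ?thesis unfolding precedes_def by (intro exI[of _ "Suc i"] exI[of _ "Suc j"]) auto
  qed
qed

lemma precedes_in_set: "precedes xs u v \<Longrightarrow> u \<in> set xs \<and> v \<in> set xs"
  unfolding precedes_def by auto

lemma precedes_append:
  "precedes (xs @ ys) u v \<longleftrightarrow> precedes xs u v \<or> precedes ys u v \<or> (u \<in> set xs \<and> v \<in> set ys)"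
  by (induction xs) (auto simp: precedes_Cons)

lemma precedes_asym: "distinct xs \<Longrightarrow> precedes xs u v \<Longrightarrow> \<not> precedes xs v u"
  by (induction xs) (auto simp: precedes_Cons dest: precedes_in_set)

lemma precedes_total:
  "u \<in> set xs \<Longrightarrow> v \<in> set xs \<Longrightarrow> u \<noteq> v \<Longrightarrow> precedes xs u v \<or> precedes xs v u"
  by (induction xs) (auto simp: precedes_Cons)

lemma precedes_trans: "distinct xs \<Longrightarrow> precedes xs u v \<Longrightarrow> precedes xs v w \<Longrightarrow> precedes xs u w"
  by (induction xs) (auto simp: precedes_Cons dest: precedes_in_set)

lemma distinct_eqI_precedes:
  assumes "distinct xs" "distinct ys" "set xs = set ys" "\<And>u v. precedes xs u v \<longleftrightarrow> precedes ys u v"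
  shows "xs = ys"
  using assms
proof (induction xs arbitrary: ys)
  case Nil
  then show ?case by simp
next
  case (Cons x xs)
  then obtain y ys' where ys: "ys = y # ys'" by (cases ys) auto
  have "x = y"
  proof (rule ccontr)
    assume "x \<noteq> y"
    then have "precedes (x # xs) x y" using Cons.prems(3) ys by (auto simp: precedes_Cons)
    then have "precedes (y # ys') x y" using Cons.prems(4) ys by simp
    then have "y \<in> set ys'" using \<open>x \<noteq> y\<close> by (auto simp: precedes_Cons dest: precedes_in_set)
    then show False using Cons.prems(2) ys by simp
  qed
  have "precedes xs u v \<longleftrightarrow> precedes ys' u v" for u v
    using Cons.prems(1,2) Cons.prems(4)[of u v] ys \<open>x = y\<close> by (auto simp: precedes_Cons dest: precedes_in_set)
  moreover have "set xs = set ys'" using Cons.prems(1-3) ys \<open>x = y\<close> by auto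
  ultimately have "xs = ys'" using Cons.IH[of ys'] Cons.prems(1,2) ys by simp
  then show ?case using ys \<open>x = y\<close> by simp
qed

lemma invs_inj:
  assumes "distinct xs" "distinct ys" "set xs = set ys" "invs xs = invs ys"
  shows "xs = ys"
proof (rule distinct_eqI_precedes[OF assms(1-3)])
  have "precedes ys u v" if "distinct xs" "set xs = set ys" "invs xs = invs ys"
    and p: "precedes xs u v" for xs ys :: "nat list" and u v
  proof (cases "v < u")
    case True
    then show ?thesis using that by (auto simp: invs_precedes)
  next
    case False
    then have "u < v" using p precedes_asym[OF that(1) p] by (cases "u = v") auto
    then have "(u, v) \<notin> invs xs" using precedes_asym[OF that(1) p] by (simp add: invs_precedes)
    then have "(u, v) \<notin> invs ys" using that(3) by simp
    then have "\<not> precedes ys v u" using \<open>u < v\<close> by (simp add: invs_precedes)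
    then show ?thesis
      using precedes_total[of u ys v] precedes_in_set[OF p] that(2) \<open>u < v\<close> by auto
  qed
  then show "precedes xs u v \<longleftrightarrow> precedes ys u v" for u v
    using assms by metis
qed

lemma invs_append:
  "invs (xs @ ys) = invs xs \<union> invs ys \<union> {(a, b). a < b \<and> b \<in> set xs \<and> a \<in> set ys}"
  by (auto simp: invs_precedes precedes_append)

lemma invs_singleton [simp]: "invs [x] = {}"
  by (auto simp: invs_precedes precedes_Cons)

lemma avoids312_if_invs_closed:
  assumes d: "distinct xs"
    and closed: "\<And>a b c. (a, b) \<in> invs xs \<Longrightarrow> a < c \<Longrightarrow> c < b \<Longrightarrow> c \<in> set xs \<Longrightarrow> (a, c) \<in> invs xs"
  shows "avoids312 xs"
  unfolding avoids312_def
proof clarify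
  fix i j k assume ijk: "i < j" "j < k" "k < length xs" "xs ! j < xs ! k" "xs ! k < xs ! i"
  have "xs ! j < xs ! i" "j < length xs" using ijk by auto
  then have "(xs ! j, xs ! i) \<in> invs xs"
    unfolding invs_def using \<open>i < j\<close> by blast
  then have "(xs ! j, xs ! k) \<in> invs xs" using closed ijk by auto
  then obtain i' j' where "i' < j'" "j' < length xs" "xs ! i' = xs ! k" "xs ! j' = xs ! j"
    unfolding invs_def by auto
  then show False using d ijk by (auto simp: nth_eq_iff_index_eq)
qed

lemma Tam_invs_closed:
  assumes "xs \<in> Tam N" "(a, b) \<in> invs xs" "a < c" "c < b" "c \<in> set xs"
  shows "(a, c) \<in> invs xs"
proof -
  have d: "distinct xs" and av: "avoids312 xs" using assms(1) by (auto simp: Tam_def perms_def)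
  obtain i j where ij: "i < j" "j < length xs" "xs ! i = b" "xs ! j = a"
    using assms(2) unfolding invs_def by auto
  obtain k where k: "k < length xs" "xs ! k = c" using assms(5) by (auto simp: in_set_conv_nth)
  show ?thesis
  proof (cases "k < j")
    case True
    then show ?thesis unfolding invs_def using k ij assms(3) by auto
  next
    case False
    then have "j < k" using k ij assms(3) by (cases "k = j") auto
    then show ?thesis using av ij k assms(3,4) unfolding avoids312_def by metis
  qed
qed

section \<open>Bracket vectors\<close>

definition laminar :: "(nat \<Rightarrow> nat) \<Rightarrow> bool" where
  "laminar r \<longleftrightarrow> (\<forall>a b. a < b \<longrightarrow> b \<le> a + r a \<longrightarrow> b + r b \<le> a + r a)"

definition brackets :: "nat \<Rightarrow> (nat \<Rightarrow> nat) set" where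
  "brackets N = {r. laminar r \<and> (\<forall>a. r a \<noteq> 0 \<longrightarrow> 0 < a \<and> a + r a \<le> N)}"

definition bracket_invs :: "(nat \<Rightarrow> nat) \<Rightarrow> (nat \<times> nat) set" where
  "bracket_invs r = {(a, b). 0 < a \<and> a < b \<and> b \<le> a + r a}"

definition bracket_vector :: "nat list \<Rightarrow> nat \<Rightarrow> nat" where
  "bracket_vector xs a = card {b. (a, b) \<in> invs xs}"

lemma laminarD: "laminar r \<Longrightarrow> a < b \<Longrightarrow> b \<le> a + r a \<Longrightarrow> b + r b \<le> a + r a"
  unfolding laminar_def by blast

lemma bracketsD:
  assumes "r \<in> brackets N"
  shows "laminar r" "r a \<noteq> 0 \<Longrightarrow> 0 < a" "r a \<noteq> 0 \<Longrightarrow> a + r a \<le> N"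
  using assms unfolding brackets_def by auto

lemma finite_closed_interval_eq:
  assumes "finite S" "\<forall>b\<in>S. a < b" "\<forall>b\<in>S. \<forall>c. a < c \<longrightarrow> c < b \<longrightarrow> c \<in> S"
  shows "S = {a<..a + card S}"
proof (cases "S = {}")
  case False
  define M where "M = Max S"
  have M: "M \<in> S" "\<forall>b\<in>S. b \<le> M" using assms(1) False unfolding M_def by auto
  have "S = {a<..M}"
  proof
    show "S \<subseteq> {a<..M}" using M assms(2) by auto
    show "{a<..M} \<subseteq> S"
    proof
      fix c assume "c \<in> {a<..M}"
      then show "c \<in> S" using assms(3) M by (cases "c = M") auto
    qed
  qed
  moreover have "a + card {a<..M} = M" using M assms(2) by auto
  ultimately show ?thesis by simp
qed simp

lemma Tam_invs_bounds:
  assumes "xs \<in> Tam N" "(a, b) \<in> invs xs"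
  shows "0 < a" "a < b" "b \<le> N" "a \<in> set xs" "b \<in> set xs"
proof -
  have "a < b" "precedes xs b a" using assms(2) by (auto simp: invs_precedes)
  moreover have "set xs = {1..N}" using assms(1) by (simp add: Tam_def perms_def)
  ultimately show "0 < a" "a < b" "b \<le> N" "a \<in> set xs" "b \<in> set xs"
    using precedes_in_set[of xs b a] by auto
qed

lemma Tam_invs_iff:
  assumes xs: "xs \<in> Tam N"
  shows "(a, b) \<in> invs xs \<longleftrightarrow> a < b \<and> b \<le> a + bracket_vector xs a"
proof -
  let ?S = "{b. (a, b) \<in> invs xs}"
  have "?S \<subseteq> {..N}" using Tam_invs_bounds(3)[OF xs] by blast
  then have "finite ?S" by (rule finite_subset) simp
  moreover have "\<forall>b\<in>?S. a < b" using Tam_invs_bounds(2)[OF xs] by blast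
  moreover have "\<forall>b\<in>?S. \<forall>c. a < c \<longrightarrow> c < b \<longrightarrow> c \<in> ?S"
  proof (intro ballI allI impI)
    fix b c assume "b \<in> ?S" "a < c" "c < b"
    moreover have "set xs = {1..N}" using xs by (simp add: Tam_def perms_def)
    ultimately have "c \<in> set xs" using Tam_invs_bounds(3)[OF xs, of a b] by auto
    then show "c \<in> ?S" using Tam_invs_closed[OF xs] \<open>b \<in> ?S\<close> \<open>a < c\<close> \<open>c < b\<close> by blast
  qed
  ultimately have "?S = {a<..a + bracket_vector xs a}"
    unfolding bracket_vector_def by (rule finite_closed_interval_eq)
  then show ?thesis by (metis (no_types, lifting) greaterThanAtMost_iff mem_Collect_eq)
qed

lemma invs_eq_bracket_invs:
  assumes xs: "xs \<in> Tam N"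
  shows "invs xs = bracket_invs (bracket_vector xs)"
proof -
  have "(a, b) \<in> invs xs \<longleftrightarrow> 0 < a \<and> a < b \<and> b \<le> a + bracket_vector xs a" for a b
    using Tam_invs_iff[OF xs, of a b] Tam_invs_bounds(1)[OF xs, of a b] by blast
  then show ?thesis by (auto simp: bracket_invs_def)
qed

lemma bracket_vector_in_brackets:
  assumes xs: "xs \<in> Tam N"
  shows "bracket_vector xs \<in> brackets N"
proof -
  let ?r = "bracket_vector xs"
  have "b + ?r b \<le> a + ?r a" if ab: "a < b" "b \<le> a + ?r a" for a b
  proof (cases "?r b = 0")
    case False
    then have "(a, b) \<in> invs xs" "(b, b + ?r b) \<in> invs xs"
      using ab Tam_invs_iff[OF xs, of a b] Tam_invs_iff[OF xs, of b "b + ?r b"] by simp_all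
    then have "precedes xs b a" "precedes xs (b + ?r b) b"
      by (auto simp: invs_precedes)
    moreover have "distinct xs" using xs by (simp add: Tam_def perms_def)
    ultimately have "precedes xs (b + ?r b) a" by (metis precedes_trans)
    then have "(a, b + ?r b) \<in> invs xs" using ab by (simp add: invs_precedes)
    then show ?thesis using Tam_invs_iff[OF xs, of a "b + ?r b"] by simp
  qed (use ab in simp)
  moreover have "0 < a \<and> a + ?r a \<le> N" if "?r a \<noteq> 0" for a
  proof -
    have "(a, a + ?r a) \<in> invs xs" using that Tam_invs_iff[OF xs, of a "a + ?r a"] by simp
    then show ?thesis using Tam_invs_bounds(1,3)[OF xs] by blast
  qed
  ultimately show ?thesis by (simp add: brackets_def laminar_def)
qed

text \<open>The inverse construction, on the values lo, \<dots>, lo + l - 1: the values nested in the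
  interval of lo, then lo, then the remaining values.\<close>

function bracket_list :: "(nat \<Rightarrow> nat) \<Rightarrow> nat \<Rightarrow> nat \<Rightarrow> nat list" where
  "bracket_list r lo 0 = []"
| "bracket_list r lo (Suc l) = bracket_list r (Suc lo) (min (r lo) l) @ [lo]
     @ bracket_list r (Suc lo + min (r lo) l) (l - min (r lo) l)"
  by pat_completeness auto
termination by (relation "measure (\<lambda>(r, lo, l). l)") auto

lemma set_bracket_list: "set (bracket_list r lo l) = {lo..<lo + l}"
  by (induction r lo l rule: bracket_list.induct) (auto simp: min_def)

lemma distinct_bracket_list: "distinct (bracket_list r lo l)"
  by (induction r lo l rule: bracket_list.induct) (auto simp: set_bracket_list min_def)

lemma invs_bracket_list:
  assumes "laminar r" "\<And>a. lo \<le> a \<Longrightarrow> a < lo + l \<Longrightarrow> a + r a < lo + l"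
  shows "invs (bracket_list r lo l) = {(a, b). lo \<le> a \<and> a < lo + l \<and> a < b \<and> b \<le> a + r a}"
  using assms
proof (induction r lo l rule: bracket_list.induct)
  case (1 r lo)
  then show ?case by (auto simp: invs_def)
next
  case (2 r lo l)
  define k where "k = min (r lo) l"
  have k: "k = r lo" "k \<le> l" using "2.prems"(2)[of lo] by (auto simp: k_def)
  have IH1: "invs (bracket_list r (Suc lo) k) = {(a, b). Suc lo \<le> a \<and> a < Suc lo + k \<and> a < b \<and> b \<le> a + r a}"
    unfolding k_def
  proof (rule "2.IH"(1)[OF "2.prems"(1)])
    fix a assume a: "Suc lo \<le> a" "a < Suc lo + min (r lo) l"
    then have "a \<le> lo + r lo" using k by (simp add: k_def)
    then have "a + r a \<le> lo + r lo" using a by (intro laminarD[OF "2.prems"(1)]) auto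
    then show "a + r a < Suc lo + min (r lo) l"
      using k by (simp add: k_def)
  qed
  have IH2: "invs (bracket_list r (Suc lo + k) (l - k))
      = {(a, b). Suc lo + k \<le> a \<and> a < lo + Suc l \<and> a < b \<and> b \<le> a + r a}"
    unfolding k_def using k(2) "2.prems" by (subst "2.IH"(2)) (auto simp: k_def)
  have split: "bracket_list r lo (Suc l) = bracket_list r (Suc lo) k @ [lo] @ bracket_list r (Suc lo + k) (l - k)"
    by (simp add: k_def)
  have "invs (bracket_list r lo (Suc l)) = invs (bracket_list r (Suc lo) k)
      \<union> invs (bracket_list r (Suc lo + k) (l - k)) \<union> {(a, b). a = lo \<and> lo < b \<and> b \<le> lo + k}"
    unfolding split invs_append set_append set_bracket_list using k(2) by auto
  also have "\<dots> = {(a, b). lo \<le> a \<and> a < lo + Suc l \<and> a < b \<and> b \<le> a + r a}"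
    unfolding IH1 IH2 using k
    by (intro set_eqI, clarsimp, intro iffI, auto)
      (metis Suc_le_eq add_Suc le_neq_implies_less not_less)
  finally show ?case .
qed

lemma bracket_list_in_Tam:
  assumes r: "r \<in> brackets N"
  shows "bracket_list r 1 N \<in> Tam N" and "invs (bracket_list r 1 N) = bracket_invs r"
proof -
  have "a + r a < 1 + N" if "1 \<le> a" "a < 1 + N" for a
    using that bracketsD(3)[OF r, of a] by (cases "r a = 0") auto
  then have "invs (bracket_list r 1 N) = {(a, b). 1 \<le> a \<and> a < 1 + N \<and> a < b \<and> b \<le> a + r a}"
    by (rule invs_bracket_list[OF bracketsD(1)[OF r]])
  also have "\<dots> = bracket_invs r"
  proof -
    have "a < 1 + N" if "a < b" "b \<le> a + r a" for a b
      using that bracketsD(3)[OF r, of a] by simp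
    then show ?thesis by (auto simp: bracket_invs_def)
  qed
  finally show inv: "invs (bracket_list r 1 N) = bracket_invs r" .
  have "avoids312 (bracket_list r 1 N)"
  proof (rule avoids312_if_invs_closed)
    show "distinct (bracket_list r 1 N)" by (rule distinct_bracket_list)
    show "(a, c) \<in> invs (bracket_list r 1 N)"
      if "(a, b) \<in> invs (bracket_list r 1 N)" "a < c" "c < b" for a b c
      using that unfolding inv bracket_invs_def by simp
  qed
  then show "bracket_list r 1 N \<in> Tam N"
    by (simp add: Tam_def perms_def distinct_bracket_list set_bracket_list atLeastLessThanSuc_atLeastAtMost)
qed

lemma bracket_invs_subset_iff:
  assumes "r \<in> brackets N"
  shows "bracket_invs r \<subseteq> bracket_invs s \<longleftrightarrow> r \<le> s"
proof
  assume sub: "bracket_invs r \<subseteq> bracket_invs s"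
  show "r \<le> s"
  proof (rule le_funI)
    fix a
    show "r a \<le> s a"
    proof (cases "r a = 0")
      case False
      then have "(a, a + r a) \<in> bracket_invs r" using bracketsD(2)[OF assms] by (auto simp: bracket_invs_def)
      then have "(a, a + r a) \<in> bracket_invs s" using sub by blast
      then show ?thesis by (simp add: bracket_invs_def)
    qed simp
  qed
qed (auto simp: bracket_invs_def le_fun_def intro: order_trans)

lemma bij_betw_bracket_vector: "bij_betw bracket_vector (Tam N) (brackets N)"
proof -
  have "inj_on bracket_vector (Tam N)"
  proof (rule inj_onI)
    fix xs ys assume xs: "xs \<in> Tam N" and ys: "ys \<in> Tam N"
      and "bracket_vector xs = bracket_vector ys"
    then have "invs xs = invs ys" using invs_eq_bracket_invs[OF xs] invs_eq_bracket_invs[OF ys] by simp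
    then show "xs = ys" using xs ys by (intro invs_inj) (auto simp: Tam_def perms_def)
  qed
  moreover have "r \<in> bracket_vector ` Tam N" if r: "r \<in> brackets N" for r
  proof -
    let ?xs = "bracket_list r 1 N"
    have "bracket_invs (bracket_vector ?xs) = bracket_invs r"
      using bracket_list_in_Tam[OF r] invs_eq_bracket_invs by metis
    then have "bracket_vector ?xs = r"
      using bracket_invs_subset_iff r bracket_vector_in_brackets[OF bracket_list_in_Tam(1)[OF r]]
      by (metis order.antisym order.refl)
    then show ?thesis using bracket_list_in_Tam(1)[OF r] by (metis imageI)
  qed
  ultimately show ?thesis
    unfolding bij_betw_def using bracket_vector_in_brackets by blast
qed

lemma weak_le_iff_bracket_vector_le:
  assumes "xs \<in> Tam N" "ys \<in> Tam N"
  shows "weak_le xs ys \<longleftrightarrow> bracket_vector xs \<le> bracket_vector ys"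
proof -
  have "weak_le xs ys \<longleftrightarrow> bracket_invs (bracket_vector xs) \<subseteq> bracket_invs (bracket_vector ys)"
    by (simp add: weak_le_def invs_eq_bracket_invs[OF assms(1)] invs_eq_bracket_invs[OF assms(2)])
  also have "\<dots> \<longleftrightarrow> bracket_vector xs \<le> bracket_vector ys"
    by (rule bracket_invs_subset_iff[OF bracket_vector_in_brackets[OF assms(1)]])
  finally show ?thesis .
qed

section \<open>Lower covers and Pop\<close>

lemma laminar_end_zero: "laminar x \<Longrightarrow> x (a + x a) = 0"
  using laminarD[of x a "a + x a"] by (cases "x a = 0") auto

text \<open>For x a > 0, the interval [a, a + x a] is the interval [a, suffix_start x a - 1] followed
  by the longest proper subinterval with the same right end. The lower covers of x are exactly the
  vectors obtained by shrinking one interval to its first part.\<close>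

definition suffix_start :: "(nat \<Rightarrow> nat) \<Rightarrow> nat \<Rightarrow> nat" where
  "suffix_start x a = (LEAST b. a < b \<and> b + x b = a + x a)"

definition prefix_len :: "(nat \<Rightarrow> nat) \<Rightarrow> nat \<Rightarrow> nat" where
  "prefix_len x a = suffix_start x a - a - 1"

definition pop_brackets :: "(nat \<Rightarrow> nat) \<Rightarrow> nat \<Rightarrow> nat" where
  "pop_brackets x a = (if x a = 0 then 0 else prefix_len x a)"

lemma suffix_start:
  assumes "laminar x" "0 < x a"
  shows "a < suffix_start x a" "suffix_start x a \<le> a + x a"
    "suffix_start x a + x (suffix_start x a) = a + x a"
proof -
  have w: "a < a + x a \<and> (a + x a) + x (a + x a) = a + x a"
    using laminar_end_zero[OF assms(1)] assms(2) by simp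
  show "a < suffix_start x a" "suffix_start x a + x (suffix_start x a) = a + x a"
    unfolding suffix_start_def using LeastI[of "\<lambda>b. a < b \<and> b + x b = a + x a", OF w] by auto
  show "suffix_start x a \<le> a + x a"
    unfolding suffix_start_def using w by (rule Least_le)
qed

lemma suffix_start_eq: "laminar x \<Longrightarrow> 0 < x a \<Longrightarrow> suffix_start x a = a + prefix_len x a + 1"
  and prefix_len_less: "laminar x \<Longrightarrow> 0 < x a \<Longrightarrow> prefix_len x a < x a"
  using suffix_start[of x a] unfolding prefix_len_def by auto

lemma suffix_start_inner:
  assumes l: "laminar x" and pos: "0 < x a" and b: "a < b" "b < suffix_start x a"
  shows "b + x b < suffix_start x a"
proof (rule ccontr)
  let ?c = "suffix_start x a"
  assume "\<not> b + x b < ?c"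
  then have "?c + x ?c \<le> b + x b" using laminarD[OF l, of b ?c] b by simp
  moreover have "b + x b \<le> a + x a" using laminarD[OF l, of a b] b suffix_start(2)[OF l pos] by simp
  ultimately have "b + x b = a + x a" using suffix_start(3)[OF l pos] by simp
  then have "?c \<le> b" unfolding suffix_start_def using b(1) by (intro Least_le) simp
  then show False using b by simp
qed

lemma laminar_fun_upd:
  assumes "laminar x"
    and inner: "\<And>q. a < q \<Longrightarrow> q \<le> a + t \<Longrightarrow> q + x q \<le> a + t"
    and outer: "\<And>p. p < a \<Longrightarrow> a \<le> p + x p \<Longrightarrow> a + t \<le> p + x p"
  shows "laminar (x(a := t))"
  unfolding laminar_def
proof (intro allI impI)
  fix p q assume pq: "p < q" "q \<le> p + (x(a := t)) p"
  show "q + (x(a := t)) q \<le> p + (x(a := t)) p"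
  proof (cases "p = a")
    case True
    then show ?thesis using pq inner[of q] by simp
  next
    case False
    then show ?thesis
      using pq outer[of p] laminarD[OF assms(1), of p q] by (cases "q = a") auto
  qed
qed

lemma fun_upd_in_brackets:
  assumes "x \<in> brackets N" "0 < a" "a + t \<le> N"
    and "\<And>q. a < q \<Longrightarrow> q \<le> a + t \<Longrightarrow> q + x q \<le> a + t"
    and "\<And>p. p < a \<Longrightarrow> a \<le> p + x p \<Longrightarrow> a + t \<le> p + x p"
  shows "x(a := t) \<in> brackets N"
  using laminar_fun_upd[OF bracketsD(1)[OF assms(1)] assms(4,5)] assms(1-3)
  by (auto simp: brackets_def)

lemma shrink_in_brackets:
  assumes x: "x \<in> brackets N" and pos: "0 < x a"
  shows "x(a := prefix_len x a) \<in> brackets N"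
proof (rule fun_upd_in_brackets[OF x])
  have l: "laminar x" by (rule bracketsD(1)[OF x])
  show "0 < a" "a + prefix_len x a \<le> N"
    using bracketsD(2,3)[OF x, of a] prefix_len_less[OF l pos] pos by auto
  show "q + x q \<le> a + prefix_len x a" if "a < q" "q \<le> a + prefix_len x a" for q
    using suffix_start_inner[OF l pos, of q] that suffix_start_eq[OF l pos] by simp
  show "a + prefix_len x a \<le> p + x p" if "p < a" "a \<le> p + x p" for p
    using laminarD[OF l that] prefix_len_less[OF l pos] by simp
qed

lemma between_shrink:
  assumes l: "laminar x" and pos: "0 < x a" and lz: "laminar z"
    and lower: "x(a := prefix_len x a) \<le> z" and upper: "z \<le> x"
  shows "z = x(a := prefix_len x a) \<or> z = x"
proof -
  have off: "z b = x b" if "b \<noteq> a" for b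
    using le_funD[OF lower, of b] le_funD[OF upper, of b] that by simp
  have "z a = prefix_len x a \<or> z a = x a"
  proof (rule ccontr)
    let ?c = "suffix_start x a"
    assume "\<not> ?thesis"
    then have za: "prefix_len x a < z a" "z a < x a"
      using le_funD[OF lower, of a] le_funD[OF upper, of a] by auto
    then have "?c \<le> a + z a" using suffix_start_eq[OF l pos] by simp
    then have "?c + z ?c \<le> a + z a" using laminarD[OF lz] suffix_start(1)[OF l pos] by blast
    then show False using off[of ?c] suffix_start(1,3)[OF l pos] za(2) by simp
  qed
  then show ?thesis
  proof
    assume "z a = prefix_len x a"
    then have "z = x(a := prefix_len x a)" using off by (intro ext) simp
    then show ?thesis ..
  next
    assume "z a = x a"
    then have "z = x" using off by (intro ext) (metis)
    then show ?thesis ..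
  qed
qed

lemma covers_shrink:
  assumes x: "x \<in> brackets N" and pos: "0 < x a"
  shows "covers (brackets N) (\<le>) (x(a := prefix_len x a)) x"
proof -
  have l: "laminar x" by (rule bracketsD(1)[OF x])
  have "x(a := prefix_len x a) \<le> x" "x(a := prefix_len x a) \<noteq> x"
    using prefix_len_less[OF l pos] by (auto simp: le_fun_def dest: fun_cong[of _ _ a])
  then show ?thesis
    unfolding covers_def using shrink_in_brackets[OF x pos] x between_shrink[OF l pos]
    by (auto dest: bracketsD(1))
qed

lemma covers_imp_shrink:
  assumes c: "covers (brackets N) (\<le>) y x"
  shows "\<exists>a. 0 < x a \<and> y = x(a := prefix_len x a)"
proof -
  have y: "y \<in> brackets N" and x: "x \<in> brackets N" and yx: "y \<le> x" "y \<noteq> x"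
    and no_between: "\<And>z. z \<in> brackets N \<Longrightarrow> y \<le> z \<Longrightarrow> z \<le> x \<Longrightarrow> z = y \<or> z = x"
    using c unfolding covers_def by auto
  have lx: "laminar x" and ly: "laminar y" using x y by (auto dest: bracketsD(1))
  define D where "D = {a. y a < x a}"
  have "D \<subseteq> {..N}"
  proof
    fix b assume "b \<in> D"
    then have "x b \<noteq> 0" by (simp add: D_def)
    then show "b \<in> {..N}" using bracketsD(3)[OF x, of b] by simp
  qed
  then have "finite D" by (rule finite_subset) simp
  moreover have "D \<noteq> {}" using yx by (auto simp: D_def le_fun_def not_less intro: order.antisym)
  ultimately obtain a where aD: "a \<in> D" and amax: "\<And>b. b \<in> D \<Longrightarrow> b \<le> a"
    using Max_in Max_ge by blast
  have ya: "y a < x a" and pos: "0 < x a" using aD by (auto simp: D_def)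
  have above: "y b = x b" if "a < b" for b
    using amax[of b] le_funD[OF yx(1), of b] that by (force simp: D_def)
  let ?c = "suffix_start x a" and ?w = "x(a := prefix_len x a)"
  have "y a \<le> prefix_len x a"
  proof (rule ccontr)
    assume "\<not> y a \<le> prefix_len x a"
    then have "?c \<le> a + y a" using suffix_start_eq[OF lx pos] by simp
    then have "?c + y ?c \<le> a + y a" using laminarD[OF ly suffix_start(1)[OF lx pos]] by blast
    then show False using above[of ?c] suffix_start(1,3)[OF lx pos] ya by simp
  qed
  then have "y \<le> ?w" using yx(1) by (auto simp: le_fun_def)
  moreover have "?w \<le> x" "?w \<noteq> x"
    using prefix_len_less[OF lx pos] by (auto simp: le_fun_def dest: fun_cong[of _ _ a])
  ultimately have "y = ?w" using no_between[OF shrink_in_brackets[OF x pos]] by blast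
  then show ?thesis using pos by blast
qed

lemma lower_covers_brackets:
  "x \<in> brackets N \<Longrightarrow> {y. covers (brackets N) (\<le>) y x} = {x(a := prefix_len x a) |a. 0 < x a}"
  using covers_shrink covers_imp_shrink by blast

lemma pop_brackets_le: "laminar x \<Longrightarrow> pop_brackets x \<le> x"
  using prefix_len_less by (auto simp: le_fun_def pop_brackets_def less_imp_le)

lemma pop_brackets_in_brackets:
  assumes x: "x \<in> brackets N"
  shows "pop_brackets x \<in> brackets N"
proof -
  have l: "laminar x" by (rule bracketsD(1)[OF x])
  have "laminar (pop_brackets x)"
    unfolding laminar_def
  proof (intro allI impI)
    fix a b assume ab: "a < b" "b \<le> a + pop_brackets x a"
    then have pos: "0 < x a" and pa: "pop_brackets x a = prefix_len x a"
      by (auto simp: pop_brackets_def split: if_splits)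
    have "b < suffix_start x a" using ab pa suffix_start_eq[OF l pos] by simp
    then have "b + x b < suffix_start x a" using suffix_start_inner[OF l pos] ab(1) by blast
    then show "b + pop_brackets x b \<le> a + pop_brackets x a"
      using le_funD[OF pop_brackets_le[OF l], of b] pa suffix_start_eq[OF l pos] by simp
  qed
  moreover have "0 < b \<and> b + pop_brackets x b \<le> N" if "pop_brackets x b \<noteq> 0" for b
  proof -
    have "x b \<noteq> 0" using that by (auto simp: pop_brackets_def split: if_splits)
    then show ?thesis
      using bracketsD(2,3)[OF x, of b] le_funD[OF pop_brackets_le[OF l], of b] by simp
  qed
  ultimately show ?thesis by (simp add: brackets_def)
qed

lemma is_glb_unique: "is_glb L (\<le>) S m \<Longrightarrow> is_glb L (\<le>) S m' \<Longrightarrow> m = (m' :: 'a :: order)"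
  unfolding is_glb_def by (auto intro: order.antisym)

lemma pop_brackets_is_glb:
  assumes x: "x \<in> brackets N"
  shows "is_glb (brackets N) (\<le>) ({y. covers (brackets N) (\<le>) y x} \<union> {x}) (pop_brackets x)"
proof -
  have l: "laminar x" by (rule bracketsD(1)[OF x])
  have "pop_brackets x \<le> x(a := prefix_len x a)" if "0 < x a" for a
    using pop_brackets_le[OF l] that by (auto simp: le_fun_def pop_brackets_def)
  moreover have "z \<le> pop_brackets x"
    if "\<forall>s\<in>{x(a := prefix_len x a) |a. 0 < x a} \<union> {x}. z \<le> s" for z
  proof (rule le_funI)
    fix a
    show "z a \<le> pop_brackets x a"
      using that le_funD[of z x a] le_funD[of z "x(a := prefix_len x a)" a]
      by (cases "x a = 0") (auto simp: pop_brackets_def)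
  qed
  ultimately show ?thesis
    unfolding is_glb_def lower_covers_brackets[OF x]
    using pop_brackets_in_brackets[OF x] pop_brackets_le[OF l] by blast
qed

lemma Pop_brackets: "x \<in> brackets N \<Longrightarrow> Pop (brackets N) (\<le>) x = pop_brackets x"
  unfolding Pop_def meet_def using pop_brackets_is_glb is_glb_unique by blast

section \<open>The image of Pop\<close>

definition distinct_ends :: "(nat \<Rightarrow> nat) \<Rightarrow> bool" where
  "distinct_ends z \<longleftrightarrow> (\<forall>a b. a < b \<longrightarrow> b \<le> a + z a \<longrightarrow> b + z b = a + z a \<longrightarrow> z b = 0)"

definition strict_brackets :: "nat \<Rightarrow> (nat \<Rightarrow> nat) set" where
  "strict_brackets n = {z \<in> brackets n. distinct_ends z}"

lemma distinct_endsD: "distinct_ends z \<Longrightarrow> a < b \<Longrightarrow> b \<le> a + z a \<Longrightarrow> b + z b = a + z a \<Longrightarrow> z b = 0"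
  unfolding distinct_ends_def by blast

lemma strict_bracketsI:
  assumes "laminar z" "\<And>a b. a < b \<Longrightarrow> b \<le> a + z a \<Longrightarrow> b + z b = a + z a \<Longrightarrow> z b = 0"
    "\<And>a. z a \<noteq> 0 \<Longrightarrow> 0 < a \<and> a + z a \<le> k"
  shows "z \<in> strict_brackets k"
  using assms unfolding strict_brackets_def brackets_def distinct_ends_def by blast

lemma strict_bracketsD:
  assumes "z \<in> strict_brackets k"
  shows "laminar z" "\<And>a b. a < b \<Longrightarrow> b \<le> a + z a \<Longrightarrow> b + z b = a + z a \<Longrightarrow> z b = 0"
    "\<And>a. z a \<noteq> 0 \<Longrightarrow> 0 < a" "\<And>a. z a \<noteq> 0 \<Longrightarrow> a + z a \<le> k"
  using assms distinct_endsD unfolding strict_brackets_def brackets_def by blast+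

lemma strict_brackets_zero: "z \<in> strict_brackets k \<Longrightarrow> k < a \<or> a = 0 \<Longrightarrow> z a = 0"
  using strict_bracketsD(3,4)[of z k a] by fastforce

lemma strict_brackets_le: "z \<in> strict_brackets k \<Longrightarrow> z a \<le> k"
  using strict_bracketsD(4)[of z k a] by (cases "z a = 0") auto

lemma brackets_mono:
  assumes "m \<le> n"
  shows "brackets m \<subseteq> brackets n"
proof
  fix r assume r: "r \<in> brackets m"
  have "0 < a \<and> a + r a \<le> n" if "r a \<noteq> 0" for a
    using bracketsD(2,3)[OF r that] assms by simp
  with bracketsD(1)[OF r] show "r \<in> brackets n" by (simp add: brackets_def)
qed

lemma strict_brackets_subset: "strict_brackets n \<subseteq> brackets (Suc n)"
  using brackets_mono[of n "Suc n"] by (auto simp: strict_brackets_def)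

lemma pop_brackets_in_strict_brackets:
  assumes x: "x \<in> brackets (Suc n)"
  shows "pop_brackets x \<in> strict_brackets n"
proof -
  have l: "laminar x" by (rule bracketsD(1)[OF x])
  let ?p = "pop_brackets x"
  have ends: "0 < x a" "a + ?p a + 1 = suffix_start x a" if "?p a \<noteq> 0" for a
    using that suffix_start_eq[OF l] by (auto simp: pop_brackets_def split: if_splits)
  have "a + ?p a \<le> n" if "?p a \<noteq> 0" for a
    using ends[OF that] suffix_start(2)[OF l ends(1)[OF that]] bracketsD(3)[OF x, of a] by simp
  then have "?p \<in> brackets n"
    using pop_brackets_in_brackets[OF x] by (simp add: brackets_def)
  moreover have "distinct_ends ?p"
    unfolding distinct_ends_def
  proof (intro allI impI)
    fix a b assume ab: "a < b" "b \<le> a + ?p a" "b + ?p b = a + ?p a"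
    then have pa: "?p a \<noteq> 0" by auto
    then have "b < suffix_start x a" using ends(2)[OF pa] ab(2) by simp
    then have "b + x b < suffix_start x a" using suffix_start_inner[OF l ends(1)[OF pa] ab(1)] by simp
    then have "x b \<le> ?p b" using ends(2)[OF pa] ab(3) by simp
    then show "?p b = 0"
      using prefix_len_less[OF l, of b] by (cases "x b = 0") (auto simp: pop_brackets_def)
  qed
  ultimately show ?thesis by (simp add: strict_brackets_def)
qed

text \<open>A preimage of z under pop_brackets extends each nonempty interval [a, a + z a] to the first
  point d beyond it with z d = 0 that is not enclosed by an interval starting after a + z a.\<close>

definition closing_point :: "(nat \<Rightarrow> nat) \<Rightarrow> nat \<Rightarrow> nat \<Rightarrow> bool" where
  "closing_point z a d \<longleftrightarrow> a + z a < d \<and> z d = 0 \<and> (\<forall>e. a + z a < e \<longrightarrow> e < d \<longrightarrow> e + z e < d)"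

definition closing :: "(nat \<Rightarrow> nat) \<Rightarrow> nat \<Rightarrow> nat" where
  "closing z a = (LEAST d. closing_point z a d)"

definition pop_preimage :: "(nat \<Rightarrow> nat) \<Rightarrow> nat \<Rightarrow> nat" where
  "pop_preimage z a = (if z a = 0 then 0 else closing z a - a)"

lemma closing_pointI:
  "a + z a < d \<Longrightarrow> z d = 0 \<Longrightarrow> (\<And>e. a + z a < e \<Longrightarrow> e < d \<Longrightarrow> e + z e < d) \<Longrightarrow> closing_point z a d"
  unfolding closing_point_def by blast

lemma closing_pointD:
  assumes "closing_point z a d"
  shows "a + z a < d" "z d = 0" "\<And>e. a + z a < e \<Longrightarrow> e < d \<Longrightarrow> e + z e < d"
  using assms unfolding closing_point_def by blast+

lemma closing_le: "closing_point z a d \<Longrightarrow> closing z a \<le> d"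
  unfolding closing_def by (rule Least_le)

context
  fixes n z assumes z: "z \<in> strict_brackets n"
begin

lemma strict_laminar: "laminar z"
  using z by (simp add: strict_brackets_def brackets_def)

lemma strict_distinct_ends: "distinct_ends z"
  using z by (simp add: strict_brackets_def)

lemma closing_point_Suc_n: "closing_point z a (Suc n)" if "z a \<noteq> 0"
proof (rule closing_pointI)
  have bound: "e + z e \<le> n" if "z e \<noteq> 0" for e
    using z that by (simp add: strict_brackets_def brackets_def)
  show "a + z a < Suc n" using bound[OF \<open>z a \<noteq> 0\<close>] by simp
  show "z (Suc n) = 0" using bound[of "Suc n"] by fastforce
  show "e + z e < Suc n" if "e < Suc n" for e
    using bound[of e] that by (cases "z e = 0") auto
qed

lemma closing_point_closing: "z a \<noteq> 0 \<Longrightarrow> closing_point z a (closing z a)"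
  unfolding closing_def by (rule LeastI[of "closing_point z a", OF closing_point_Suc_n])

lemma closing_inner:
  assumes a: "z a \<noteq> 0" and b: "z b \<noteq> 0" "a < b" "b \<le> a + z a"
  shows "closing z b \<le> a + z a"
proof (rule closing_le, rule closing_pointI)
  have "b + z b \<noteq> a + z a" using distinct_endsD[OF strict_distinct_ends b(2,3)] b(1) by auto
  then show "b + z b < a + z a" using laminarD[OF strict_laminar b(2,3)] by simp
  show "z (a + z a) = 0" by (rule laminar_end_zero[OF strict_laminar])
  fix e assume e: "b + z b < e" "e < a + z a"
  then have "e + z e \<le> a + z a" using laminarD[OF strict_laminar, of a e] b by simp
  moreover have "e + z e \<noteq> a + z a"
    using distinct_endsD[OF strict_distinct_ends, of a e] b e by auto
  ultimately show "e + z e < a + z a" by simp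
qed

lemma closing_outer:
  assumes a: "z a \<noteq> 0" and b: "z b \<noteq> 0" "a + z a < b" "b < closing z a"
  shows "closing z b \<le> closing z a"
  using closing_pointD[OF closing_point_closing[OF a]] b
  by (intro closing_le closing_pointI) auto

lemma closing_next:
  assumes a: "z a \<noteq> 0" and c: "z (a + z a + 1) \<noteq> 0"
  shows "closing z a \<le> closing z (a + z a + 1)"
proof (rule closing_le, rule closing_pointI)
  let ?c = "a + z a + 1"
  note cl = closing_pointD[OF closing_point_closing[OF c]]
  show "a + z a < closing z ?c" "z (closing z ?c) = 0" using cl(1,2) by simp_all
  fix e assume e: "a + z a < e" "e < closing z ?c"
  show "e + z e < closing z ?c"
  proof (cases "e \<le> ?c + z ?c")
    case True
    then have "e + z e \<le> ?c + z ?c"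
      using laminarD[OF strict_laminar, of ?c e] e(1) by (cases "e = ?c") auto
    then show ?thesis using cl(1) by simp
  qed (use cl(3) e in simp)
qed

lemma pop_preimage_end:
  assumes "z a \<noteq> 0"
  shows "a + pop_preimage z a = closing z a"
  using closing_pointD(1)[OF closing_point_closing[OF assms]] assms by (simp add: pop_preimage_def)

lemma pop_preimage_in_brackets: "pop_preimage z \<in> brackets (Suc n)"
proof -
  let ?x = "pop_preimage z"
  have "b + ?x b \<le> a + ?x a" if ab: "a < b" "b \<le> a + ?x a" for a b
  proof -
    have a: "z a \<noteq> 0" using ab by (auto simp: pop_preimage_def split: if_splits)
    note cla = closing_pointD[OF closing_point_closing[OF a]]
    show ?thesis
    proof (cases "z b = 0")
      case False
      have "closing z b \<le> closing z a"
      proof (cases "b \<le> a + z a")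
        case True
        then show ?thesis using closing_inner[OF a False ab(1)] cla(1) by simp
      next
        case outside: False
        have "b \<noteq> closing z a" using cla(2) False by auto
        then show ?thesis
          using closing_outer[OF a False] outside ab(2) pop_preimage_end[OF a] by simp
      qed
      then show ?thesis using pop_preimage_end[OF a] pop_preimage_end[OF False] by simp
    qed (use ab in \<open>simp add: pop_preimage_def\<close>)
  qed
  moreover have "0 < b \<and> b + ?x b \<le> Suc n" if "?x b \<noteq> 0" for b
  proof -
    have b: "z b \<noteq> 0" using that by (auto simp: pop_preimage_def split: if_splits)
    then show ?thesis
      using z closing_le[OF closing_point_Suc_n[OF b]] pop_preimage_end[OF b]
      by (simp add: strict_brackets_def brackets_def)
  qed
  ultimately show ?thesis by (simp add: brackets_def laminar_def)
qed

lemma suffix_start_pop_preimage: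
  assumes a: "z a \<noteq> 0"
  shows "suffix_start (pop_preimage z) a = a + z a + 1"
  unfolding suffix_start_def
proof (rule Least_equality)
  let ?x = "pop_preimage z" and ?c = "a + z a + 1"
  note cla = closing_pointD[OF closing_point_closing[OF a]]
  have "?c + ?x ?c = closing z a"
  proof (cases "z ?c = 0")
    case True
    then have "closing z a \<le> ?c" by (intro closing_le closing_pointI) auto
    then show ?thesis using cla(1) True by (simp add: pop_preimage_def)
  next
    case False
    have "?c \<noteq> closing z a" using cla(2) False by auto
    then have "closing z ?c \<le> closing z a" using closing_outer[OF a False] cla(1) by simp
    then show ?thesis using closing_next[OF a False] pop_preimage_end[OF False] by simp
  qed
  then show "a < ?c \<and> ?c + ?x ?c = a + ?x a" using pop_preimage_end[OF a] by simp
  fix b assume b: "a < b \<and> b + ?x b = a + ?x a"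
  show "?c \<le> b"
  proof (rule ccontr)
    assume "\<not> ?c \<le> b"
    then have "b \<le> a + z a" by simp
    have "b + ?x b \<le> a + z a"
    proof (cases "z b = 0")
      case False
      then show ?thesis
        using closing_inner[OF a False] b \<open>b \<le> a + z a\<close> pop_preimage_end[OF False] by simp
    qed (simp add: pop_preimage_def \<open>b \<le> a + z a\<close>)
    then show False using b pop_preimage_end[OF a] cla(1) by simp
  qed
qed

lemma pop_pop_preimage: "pop_brackets (pop_preimage z) = z"
proof
  fix a
  show "pop_brackets (pop_preimage z) a = z a"
  proof (cases "z a = 0")
    case False
    have "0 < pop_preimage z a"
      using pop_preimage_end[OF False] closing_pointD(1)[OF closing_point_closing[OF False]] by simp
    then show ?thesis
      using suffix_start_pop_preimage[OF False]
      by (simp add: pop_brackets_def prefix_len_def)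
  qed (simp add: pop_brackets_def pop_preimage_def)
qed

end

lemma pop_brackets_image: "pop_brackets ` brackets (Suc n) = strict_brackets n"
  using pop_brackets_in_strict_brackets pop_pop_preimage pop_preimage_in_brackets
  by (metis (no_types, lifting) image_eqI image_subsetI subsetI subset_antisym)

text \<open>Upper covers: the interval of a absorbs the interval starting at a + z a + 1, which is
  possible unless the result reaches N or shares its right end with an enclosing interval.\<close>

definition grow :: "(nat \<Rightarrow> nat) \<Rightarrow> nat \<Rightarrow> nat \<Rightarrow> nat" where
  "grow z a = z(a := z a + 1 + z (a + z a + 1))"

definition growable :: "nat \<Rightarrow> (nat \<Rightarrow> nat) \<Rightarrow> nat set" where
  "growable N z = {a. 0 < a \<and> a + z a < N \<and> (\<forall>e<a. a \<le> e + z e \<longrightarrow> a + z a < e + z e)}"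

lemma grow_in_brackets:
  assumes z: "z \<in> brackets N" and a: "a \<in> growable N z"
  shows "grow z a \<in> brackets N"
  unfolding grow_def
proof (rule fun_upd_in_brackets[OF z])
  let ?c = "a + z a + 1"
  have l: "laminar z" by (rule bracketsD(1)[OF z])
  have c_end: "?c + z ?c \<le> N" using bracketsD(3)[OF z, of ?c] a by (cases "z ?c = 0") (auto simp: growable_def)
  show "0 < a" "a + (z a + 1 + z ?c) \<le> N" using a c_end by (auto simp: growable_def)
  show "q + z q \<le> a + (z a + 1 + z ?c)" if "a < q" "q \<le> a + (z a + 1 + z ?c)" for q
  proof -
    consider "q \<le> a + z a" | "q = ?c" | "?c < q" by linarith
    then show ?thesis
      using laminarD[OF l, of a q] laminarD[OF l, of ?c q] that by cases auto
  qed
  show "a + (z a + 1 + z ?c) \<le> p + z p" if "p < a" "a \<le> p + z p" for p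
    using a that laminarD[OF l, of p ?c] by (auto simp: growable_def)
qed

lemma grow_shrink:
  assumes z: "z \<in> brackets N" and a: "a \<in> growable N z"
  shows "0 < grow z a a" and "(grow z a)(a := prefix_len (grow z a) a) = z"
proof -
  let ?x = "grow z a" and ?c = "a + z a + 1"
  have l: "laminar z" by (rule bracketsD(1)[OF z])
  show pos: "0 < ?x a" by (simp add: grow_def)
  have "suffix_start ?x a = ?c"
    unfolding suffix_start_def
  proof (rule Least_equality)
    show "a < ?c \<and> ?c + ?x ?c = a + ?x a" by (simp add: grow_def)
    fix b assume b: "a < b \<and> b + ?x b = a + ?x a"
    show "?c \<le> b"
    proof (rule ccontr)
      assume "\<not> ?c \<le> b"
      then have "b + z b \<le> a + z a" using laminarD[OF l, of a b] b by simp
      then show False using b by (auto simp: grow_def)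
    qed
  qed
  then have "prefix_len ?x a = z a" by (simp add: prefix_len_def)
  then show "?x(a := prefix_len ?x a) = z" by (simp add: grow_def)
qed

lemma upcovers_brackets:
  assumes z: "z \<in> brackets N"
  shows "upcovers (brackets N) (\<le>) z = grow z ` growable N z"
proof (intro equalityI subsetI)
  fix x assume "x \<in> upcovers (brackets N) (\<le>) z"
  then have cv: "covers (brackets N) (\<le>) z x" by (simp add: upcovers_def)
  then have x: "x \<in> brackets N" by (simp add: covers_def)
  have lx: "laminar x" by (rule bracketsD(1)[OF x])
  obtain a where pos: "0 < x a" and ze: "z = x(a := prefix_len x a)"
    using covers_imp_shrink[OF cv] by blast
  have "x = grow z a"
    using suffix_start(3)[OF lx pos] suffix_start_eq[OF lx pos] ze
    by (intro ext) (simp add: grow_def)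
  moreover have "a \<in> growable N z"
    unfolding growable_def
  proof (intro CollectI conjI allI impI)
    show "0 < a" using bracketsD(2)[OF x, of a] pos by simp
    show "a + z a < N"
      using bracketsD(3)[OF x, of a] pos suffix_start(2)[OF lx pos] suffix_start_eq[OF lx pos] ze by simp
    fix e assume e: "e < a" "a \<le> e + z e"
    then have "a + x a \<le> e + x e" using laminarD[OF lx, of e a] ze by simp
    then show "a + z a < e + z e" using prefix_len_less[OF lx pos] ze e(1) by simp
  qed
  ultimately show "x \<in> grow z ` growable N z" by blast
next
  fix x assume "x \<in> grow z ` growable N z"
  then obtain a where a: "a \<in> growable N z" and x: "x = grow z a" by blast
  show "x \<in> upcovers (brackets N) (\<le>) z"
    using covers_shrink[OF grow_in_brackets[OF z a] grow_shrink(1)[OF z a]] grow_shrink(2)[OF z a] x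
    by (simp add: upcovers_def)
qed

lemma card_upcovers_brackets:
  assumes "z \<in> brackets N"
  shows "card (upcovers (brackets N) (\<le>) z) = card (growable N z)"
proof -
  have "inj_on (grow z) (growable N z)"
  proof (rule inj_onI, rule ccontr)
    fix a b assume "grow z a = grow z b" "a \<noteq> b"
    then have "grow z a a = grow z b a" by simp
    then show False using \<open>a \<noteq> b\<close> by (simp add: grow_def)
  qed
  then show ?thesis by (simp add: upcovers_brackets[OF assms] card_image)
qed

definition support_size :: "(nat \<Rightarrow> nat) \<Rightarrow> nat" where
  "support_size z = card {a. z a \<noteq> 0}"

lemma inj_on_right_ends:
  assumes "distinct_ends z"
  shows "inj_on (\<lambda>e. e + z e) {a. z a \<noteq> 0}"
proof (rule inj_onI)
  fix e e' assume e: "e \<in> {a. z a \<noteq> 0}" "e' \<in> {a. z a \<noteq> 0}" "e + z e = e' + z e'"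
  have "z e' = 0" if "e < e'" by (rule distinct_endsD[OF assms that]) (use e(3) in linarith)+
  moreover have "z e = 0" if "e' < e" by (rule distinct_endsD[OF assms that]) (use e(3) in linarith)+
  ultimately show "e = e'" using e(1,2) by (cases e e' rule: linorder_cases) auto
qed

text \<open>A position a \<le> n can grow iff it is not the right end of a nonempty interval: otherwise the
  interval of a would end where an enclosing interval ends.\<close>

lemma growable_eq:
  assumes z: "z \<in> strict_brackets n"
  shows "growable (Suc n) z = {1..n} - (\<lambda>e. e + z e) ` {a. z a \<noteq> 0}" (is "_ = _ - ?E")
proof (intro equalityI subsetI)
  fix a assume a: "a \<in> growable (Suc n) z"
  have "a \<notin> ?E"
  proof
    assume "a \<in> ?E"
    then obtain e where e: "z e \<noteq> 0" "a = e + z e" by blast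
    then have "e < a" "a \<le> e + z e" by simp_all
    then have "a + z a < e + z e" using a unfolding growable_def by blast
    then show False using e(2) by simp
  qed
  then show "a \<in> {1..n} - ?E" using a by (auto simp: growable_def)
next
  fix a assume a: "a \<in> {1..n} - ?E"
  have "a + z a < Suc n" using strict_bracketsD(4)[OF z, of a] a by (cases "z a = 0") auto
  moreover have "a + z a < e + z e" if "e < a" "a \<le> e + z e" for e
  proof -
    have "a + z a \<le> e + z e" using laminarD[OF strict_bracketsD(1)[OF z] that] .
    moreover have "a + z a \<noteq> e + z e"
    proof
      assume eq: "a + z a = e + z e"
      then have "z a = 0" using strict_bracketsD(2)[OF z that] by simp
      then have "a \<in> ?E" using eq that by (auto simp: image_iff)
      then show False using a by simp
    qed
    ultimately show ?thesis by simp
  qed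
  ultimately show "a \<in> growable (Suc n) z" using a by (auto simp: growable_def)
qed

lemma card_growable:
  assumes z: "z \<in> strict_brackets n"
  shows "card (growable (Suc n) z) = n - support_size z"
proof -
  let ?E = "(\<lambda>e. e + z e) ` {a. z a \<noteq> 0}"
  have sub: "?E \<subseteq> {1..n}" using strict_bracketsD(3,4)[OF z] by fastforce
  have "card ?E = support_size z"
    using inj_on_right_ends[OF strict_distinct_ends[OF z]] by (simp add: card_image support_size_def)
  then show ?thesis
    using card_Diff_subset[OF finite_subset[OF sub finite_atLeastAtMost] sub] growable_eq[OF z] by simp
qed

section \<open>Counting strict bracket vectors\<close>

lemma translated_strict_brackets:
  assumes u: "u \<in> strict_brackets k" and zu: "\<forall>a. lo < a \<longrightarrow> a \<le> lo + k \<longrightarrow> z a = u (a - lo)"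
    and p: "lo < p" "p \<le> lo + k" and zp: "z p \<noteq> 0"
  shows "p + z p \<le> lo + k"
    and "\<And>q. p < q \<Longrightarrow> q \<le> p + z p \<Longrightarrow> q + z q \<le> p + z p"
    and "\<And>q. p < q \<Longrightarrow> q \<le> p + z p \<Longrightarrow> q + z q = p + z p \<Longrightarrow> z q = 0"
proof -
  define p' where "p' = p - lo"
  have pp: "p = p' + lo" "z p = u p'" using p zu by (auto simp: p'_def)
  have b: "p' + u p' \<le> k" using strict_bracketsD(4)[OF u] zp pp by simp
  then show "p + z p \<le> lo + k" using pp by simp
  fix q assume q: "p < q" "q \<le> p + z p"
  define q' where "q' = q - lo"
  have qw: "lo < q" "q \<le> lo + k" using q p b pp by auto
  have qq: "q = q' + lo" "z q = u q'" using qw zu by (auto simp: q'_def)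
  have q'': "p' < q'" "q' \<le> p' + u p'" using q pp qq by auto
  have "q' + u q' \<le> p' + u p'" using laminarD[OF strict_bracketsD(1)[OF u] q''] .
  then show "q + z q \<le> p + z p" using pp qq by simp
  assume "q + z q = p + z p"
  then have "q' + u q' = p' + u p'" using pp qq by simp
  from strict_bracketsD(2)[OF u q'' this] show "z q = 0" using qq by simp
qed

text \<open>Decomposition at position 1, as for Motzkin paths: either no interval starts at 1, or the
  interval [1, 1 + m] encloses a strict bracket vector on 2, \<dots>, m and another one lives on
  m + 2, \<dots>, n + 1.\<close>

definition shift_brackets :: "(nat \<Rightarrow> nat) \<Rightarrow> nat \<Rightarrow> nat" where
  "shift_brackets w = (\<lambda>a. if a \<le> 1 then 0 else w (a - 1))"

definition join_brackets :: "nat \<Rightarrow> (nat \<Rightarrow> nat) \<Rightarrow> (nat \<Rightarrow> nat) \<Rightarrow> nat \<Rightarrow> nat" where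
  "join_brackets m u w = (\<lambda>a. if a = 0 then 0 else if a = 1 then m else if a \<le> m then u (a - 1)
     else if a = Suc m then 0 else w (a - Suc m))"

definition window :: "nat \<Rightarrow> nat \<Rightarrow> (nat \<Rightarrow> nat) \<Rightarrow> nat \<Rightarrow> nat" where
  "window lo k z = (\<lambda>a. if 0 < a \<and> a \<le> k then z (a + lo) else 0)"

lemma shift_brackets_in_strict_brackets:
  assumes w: "w \<in> strict_brackets n"
  shows "shift_brackets w \<in> strict_brackets (Suc n)"
proof -
  let ?z = "shift_brackets w"
  have zw: "\<forall>a. 1 < a \<longrightarrow> a \<le> 1 + n \<longrightarrow> ?z a = w (a - 1)" by (simp add: shift_brackets_def)
  have inside: "1 < p \<and> p \<le> 1 + n" if "?z p \<noteq> 0" for p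
  proof -
    have "1 < p" "w (p - 1) \<noteq> 0" using that by (auto simp: shift_brackets_def split: if_splits)
    then show ?thesis using strict_bracketsD(4)[OF w, of "p - 1"] by simp
  qed
  note tr = translated_strict_brackets[OF w zw]
  show ?thesis
  proof (rule strict_bracketsI)
    show "laminar ?z"
      unfolding laminar_def
    proof (intro allI impI)
      fix p q assume pq: "p < q" "q \<le> p + ?z p"
      then have "?z p \<noteq> 0" by auto
      then show "q + ?z q \<le> p + ?z p" using tr(2)[OF _ _ _ pq] inside by blast
    qed
    show "?z b = 0" if ab: "a < b" "b \<le> a + ?z a" "b + ?z b = a + ?z a" for a b
    proof -
      have "?z a \<noteq> 0" using ab by auto
      then show ?thesis using tr(3)[OF _ _ _ ab] inside by blast
    qed
    show "0 < a \<and> a + ?z a \<le> Suc n" if "?z a \<noteq> 0" for a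
      using inside[OF that] tr(1)[of a] that by simp
  qed
qed

context
  fixes m n u w
  assumes u: "u \<in> strict_brackets (m - 1)" and w: "w \<in> strict_brackets (n - m)"
    and m: "1 \<le> m" "m \<le> n"
begin

lemma join_brackets_support:
  assumes "join_brackets m u w p \<noteq> 0"
  shows "p = 1 \<or> (1 < p \<and> p \<le> 1 + (m - 1)) \<or> (Suc m < p \<and> p \<le> Suc m + (n - m))"
proof -
  have "\<not> Suc m + (n - m) < p"
  proof
    assume "Suc m + (n - m) < p"
    then have "w (p - Suc m) = 0" using strict_brackets_zero[OF w, of "p - Suc m"] by simp
    then show False using assms \<open>Suc m + (n - m) < p\<close> by (simp add: join_brackets_def)
  qed
  then show ?thesis using assms m by (auto simp: join_brackets_def split: if_splits)
qed

lemma join_brackets_first_inner: "1 < q \<Longrightarrow> q \<le> m \<Longrightarrow> q + join_brackets m u w q \<le> m"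
  using strict_bracketsD(4)[OF u, of "q - 1"] m
  by (cases "u (q - 1) = 0") (auto simp: join_brackets_def)

lemma join_brackets_in_strict_brackets: "join_brackets m u w \<in> strict_brackets (Suc n)"
proof -
  let ?z = "join_brackets m u w"
  have z1: "?z 1 = m" and zm: "?z (Suc m) = 0" using m by (auto simp: join_brackets_def)
  have zu: "\<forall>a. 1 < a \<longrightarrow> a \<le> 1 + (m - 1) \<longrightarrow> ?z a = u (a - 1)"
    and zw: "\<forall>a. Suc m < a \<longrightarrow> a \<le> Suc m + (n - m) \<longrightarrow> ?z a = w (a - Suc m)"
    using m by (auto simp: join_brackets_def)
  note tu = translated_strict_brackets[OF u zu] and tw = translated_strict_brackets[OF w zw]
  have first: "q + ?z q \<le> 1 + ?z 1 \<and> (q + ?z q = 1 + ?z 1 \<longrightarrow> ?z q = 0)" if "1 < q" "q \<le> 1 + ?z 1" for q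
    using join_brackets_first_inner[of q] that z1 zm by (cases "q \<le> m") (auto simp: le_Suc_eq)
  show ?thesis
  proof (rule strict_bracketsI)
    show "laminar ?z"
      unfolding laminar_def
    proof (intro allI impI)
      fix p q assume pq: "p < q" "q \<le> p + ?z p"
      then have "?z p \<noteq> 0" by auto
      from join_brackets_support[OF this] show "q + ?z q \<le> p + ?z p"
        using first[of q] tu(2)[OF _ _ _ pq] tw(2)[OF _ _ _ pq] pq by auto
    qed
    show "?z b = 0" if ab: "a < b" "b \<le> a + ?z a" "b + ?z b = a + ?z a" for a b
    proof -
      have "?z a \<noteq> 0" using ab by auto
      from join_brackets_support[OF this] show ?thesis
        using first[of b] tu(3)[OF _ _ _ ab] tw(3)[OF _ _ _ ab] ab by auto
    qed
    show "0 < a \<and> a + ?z a \<le> Suc n" if "?z a \<noteq> 0" for a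
      using join_brackets_support[OF that] tu(1)[of a] tw(1)[of a] that z1 m by auto
  qed
qed

end

lemma window_in_strict_brackets:
  assumes z: "z \<in> strict_brackets K"
    and closed: "\<And>a. lo < a \<Longrightarrow> a \<le> lo + k \<Longrightarrow> z a \<noteq> 0 \<Longrightarrow> a + z a \<le> lo + k"
  shows "window lo k z \<in> strict_brackets k"
proof -
  let ?u = "window lo k z"
  have ui: "?u b = z (b + lo)" if "0 < b" "b \<le> k" for b using that by (simp add: window_def)
  have supp: "0 < b \<and> b + ?u b \<le> k" if "?u b \<noteq> 0" for b
  proof -
    have b: "0 < b" "b \<le> k" using that by (auto simp: window_def split: if_splits)
    then have "(b + lo) + z (b + lo) \<le> lo + k" using closed[of "b + lo"] that ui[OF b] by simp
    then show ?thesis using b ui[OF b] by simp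
  qed
  show ?thesis
  proof (rule strict_bracketsI)
    show "laminar ?u"
      unfolding laminar_def
    proof (intro allI impI)
      fix p q assume pq: "p < q" "q \<le> p + ?u p"
      then have p: "0 < p" "p + ?u p \<le> k" using supp[of p] by auto
      then have "(q + lo) + z (q + lo) \<le> (p + lo) + z (p + lo)"
        using laminarD[OF strict_bracketsD(1)[OF z], of "p + lo" "q + lo"] pq ui[of p] by simp
      then show "q + ?u q \<le> p + ?u p" using ui[of p] ui[of q] p pq by simp
    qed
    show "?u b = 0" if ab: "a < b" "b \<le> a + ?u a" "b + ?u b = a + ?u a" for a b
    proof -
      have a: "0 < a" "a + ?u a \<le> k" using supp[of a] ab by auto
      then have b: "0 < b" "b \<le> k" using ab by auto
      have "z (b + lo) = 0"
        by (rule strict_bracketsD(2)[OF z, of "a + lo"]) (use ab ui[OF a(1)] a ui[OF b] in simp_all)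
      then show ?thesis using ui[OF b] by simp
    qed
  qed (rule supp)
qed

lemma decompose_unused_first:
  assumes z: "z \<in> strict_brackets (Suc n)" and z1: "z 1 = 0"
  shows "window 1 n z \<in> strict_brackets n" and "shift_brackets (window 1 n z) = z"
proof -
  show "window 1 n z \<in> strict_brackets n"
    by (rule window_in_strict_brackets[OF z]) (use strict_bracketsD(4)[OF z] in simp)
  show "shift_brackets (window 1 n z) = z"
  proof
    fix a
    show "shift_brackets (window 1 n z) a = z a"
      using z1 strict_brackets_zero[OF z, of a] by (cases "a \<le> Suc n") (auto simp: shift_brackets_def window_def le_Suc_eq)
  qed
qed

lemma decompose_used_first:
  assumes z: "z \<in> strict_brackets (Suc n)" and z1: "z 1 = m" and m: "0 < m"
  shows "m \<le> n" and "window 1 (m - 1) z \<in> strict_brackets (m - 1)"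
    and "window (Suc m) (n - m) z \<in> strict_brackets (n - m)"
    and "join_brackets m (window 1 (m - 1) z) (window (Suc m) (n - m) z) = z"
proof -
  have l: "laminar z" by (rule strict_bracketsD(1)[OF z])
  show mn: "m \<le> n" using strict_bracketsD(4)[OF z, of 1] m z1 by simp
  show "window 1 (m - 1) z \<in> strict_brackets (m - 1)"
  proof (rule window_in_strict_brackets[OF z])
    fix a assume a: "1 < a" "a \<le> 1 + (m - 1)" "z a \<noteq> 0"
    have "a + z a \<le> 1 + z 1" using laminarD[OF l, of 1 a] a z1 m by simp
    moreover have "a + z a \<noteq> 1 + z 1" using strict_bracketsD(2)[OF z, of 1 a] a z1 m by auto
    ultimately show "a + z a \<le> 1 + (m - 1)" using z1 m by simp
  qed
  show "window (Suc m) (n - m) z \<in> strict_brackets (n - m)"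
    by (rule window_in_strict_brackets[OF z]) (use strict_bracketsD(4)[OF z] mn in simp)
  have zm: "z (Suc m) = 0" using laminar_end_zero[OF l, of 1] z1 by simp
  show "join_brackets m (window 1 (m - 1) z) (window (Suc m) (n - m) z) = z"
  proof
    fix a
    consider "a = 0" | "a = 1" | "1 < a \<and> a \<le> m" | "a = Suc m" | "Suc m < a \<and> a \<le> Suc n" | "Suc n < a"
      by linarith
    then show "join_brackets m (window 1 (m - 1) z) (window (Suc m) (n - m) z) a = z a"
      by cases (use strict_brackets_zero[OF z, of a] z1 zm m mn in \<open>auto simp: join_brackets_def window_def\<close>)
  qed
qed

lemma window_shift_brackets: "w \<in> strict_brackets n \<Longrightarrow> window 1 n (shift_brackets w) = w"
  using strict_brackets_zero[of w n] by (auto simp: window_def shift_brackets_def fun_eq_iff)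

lemma window_join_brackets:
  assumes "u \<in> strict_brackets (m - 1)" "w \<in> strict_brackets (n - m)" "0 < m"
  shows "window 1 (m - 1) (join_brackets m u w) = u" and "window (Suc m) (n - m) (join_brackets m u w) = w"
  using assms strict_brackets_zero[OF assms(1)] strict_brackets_zero[OF assms(2)]
  by (auto simp: window_def join_brackets_def fun_eq_iff)

lemma finite_strict_brackets: "finite (strict_brackets k)"
proof -
  let ?h = "\<lambda>z. map z [0..<Suc k]"
  have "inj_on ?h (strict_brackets k)"
  proof (rule inj_onI, rule ext)
    fix z z' a assume z: "z \<in> strict_brackets k" and z': "z' \<in> strict_brackets k" and eq: "?h z = ?h z'"
    show "z a = z' a"
    proof (cases "a \<le> k")
      case True
      have "\<forall>x\<in>set [0..<Suc k]. z x = z' x" using eq by (simp only: map_eq_conv)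
      moreover have "a \<in> set [0..<Suc k]" unfolding set_upt using True by simp
      ultimately show ?thesis by blast
    qed (use strict_brackets_zero[OF z, of a] strict_brackets_zero[OF z', of a] in simp)
  qed
  moreover have "?h ` strict_brackets k \<subseteq> {xs. set xs \<subseteq> {0..k} \<and> length xs = Suc k}"
    using strict_brackets_le by fastforce
  then have "finite (?h ` strict_brackets k)"
    by (rule finite_subset) (rule finite_lists_length_eq, simp)
  ultimately show ?thesis by (simp add: finite_image_iff)
qed

lemma finite_support: "z \<in> strict_brackets k \<Longrightarrow> finite {a. z a \<noteq> 0}"
  by (rule finite_subset[of _ "{..k}"]) (auto dest: strict_bracketsD(4))

lemma support_size_le:
  assumes z: "z \<in> strict_brackets k"
  shows "support_size z \<le> k"
proof -
  have "{a. z a \<noteq> 0} \<subseteq> {1..k}" using strict_bracketsD(3,4)[OF z] by fastforce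
  then show ?thesis unfolding support_size_def using card_mono[of "{1..k}"] by fastforce
qed

lemma support_size_shift:
  assumes w: "w \<in> strict_brackets n"
  shows "support_size (shift_brackets w) = support_size w"
proof -
  have "{a. shift_brackets w a \<noteq> 0} = Suc ` {a. w a \<noteq> 0}"
    using strict_bracketsD(3)[OF w]
    by (force simp: shift_brackets_def image_iff gr0_conv_Suc split: if_splits)
  then show ?thesis by (simp add: support_size_def card_image)
qed

lemma support_size_join:
  assumes u: "u \<in> strict_brackets (m - 1)" and w: "w \<in> strict_brackets (n - m)" and m: "0 < m"
  shows "support_size (join_brackets m u w) = Suc (support_size u + support_size w)"
proof -
  let ?U = "Suc ` {b. u b \<noteq> 0}" and ?W = "(\<lambda>b. b + Suc m) ` {b. w b \<noteq> 0}"
  have U_range: "1 < a \<and> a \<le> m" if "a \<in> ?U" for a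
    using that strict_bracketsD(3,4)[OF u] m by fastforce
  have W_range: "Suc m < a" if "a \<in> ?W" for a
    using that strict_bracketsD(3)[OF w] by fastforce
  have "{a. join_brackets m u w a \<noteq> 0} = insert 1 (?U \<union> ?W)"
  proof (intro equalityI subsetI)
    fix a assume "a \<in> {a. join_brackets m u w a \<noteq> 0}"
    then consider "a = 1" | "1 < a" "a \<le> m" "u (a - 1) \<noteq> 0" | "Suc m < a" "w (a - Suc m) \<noteq> 0"
      by (auto simp: join_brackets_def split: if_splits)
    then show "a \<in> insert 1 (?U \<union> ?W)"
    proof cases
      case 2
      then show ?thesis by (auto intro: rev_image_eqI[of "a - 1"])
    next
      case 3
      then show ?thesis by (auto intro: rev_image_eqI[of "a - Suc m"])
    qed simp
  next
    fix a assume a: "a \<in> insert 1 (?U \<union> ?W)"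
    then show "a \<in> {a. join_brackets m u w a \<noteq> 0}"
      using U_range[of a] W_range[of a] m by (auto simp: join_brackets_def)
  qed
  moreover have "1 \<notin> ?U \<union> ?W" "?U \<inter> ?W = {}"
    using U_range W_range by fastforce+
  moreover have "finite ?U" "finite ?W" using finite_support[OF u] finite_support[OF w] by simp_all
  ultimately show ?thesis
    by (simp add: support_size_def card_Un_disjoint card_image inj_on_def)
qed

definition strict_count :: "nat \<Rightarrow> nat \<Rightarrow> nat" where
  "strict_count n k = card {z \<in> strict_brackets n. support_size z = k}"

lemma card_pairs_sum_eq:
  fixes f :: "'a \<Rightarrow> nat" and g :: "'b \<Rightarrow> nat"
  assumes "finite U" "finite W"
  shows "card {p \<in> U \<times> W. f (fst p) + g (snd p) = j}
    = (\<Sum>i\<le>j. card {u \<in> U. f u = i} * card {w \<in> W. g w = j - i})"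
proof -
  have "{p \<in> U \<times> W. f (fst p) + g (snd p) = j} = (\<Union>i\<le>j. {u \<in> U. f u = i} \<times> {w \<in> W. g w = j - i})"
    by force
  also have "card \<dots> = (\<Sum>i\<le>j. card ({u \<in> U. f u = i} \<times> {w \<in> W. g w = j - i}))"
    by (rule card_UN_disjoint) (use assms in auto)
  finally show ?thesis by (simp add: card_cartesian_product)
qed

definition split_pairs :: "nat \<Rightarrow> nat \<Rightarrow> nat \<Rightarrow> ((nat \<Rightarrow> nat) \<times> (nat \<Rightarrow> nat)) set" where
  "split_pairs n m k = {p \<in> strict_brackets (m - 1) \<times> strict_brackets (n - m).
     Suc (support_size (fst p) + support_size (snd p)) = k}"

lemma join_split_pairs:
  assumes z: "z \<in> strict_brackets (Suc n)" and m: "0 < z 1"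
  shows "z 1 \<in> {1..n}" and "z \<in> (\<lambda>(u, w). join_brackets (z 1) u w) ` split_pairs n (z 1) (support_size z)"
proof -
  note d = decompose_used_first[OF z refl m]
  show "z 1 \<in> {1..n}" using d(1) m by simp
  have "support_size z = Suc (support_size (window 1 (z 1 - 1) z) + support_size (window (Suc (z 1)) (n - z 1) z))"
    using support_size_join[OF d(2,3) m] by (simp only: d(4))
  then have "(window 1 (z 1 - 1) z, window (Suc (z 1)) (n - z 1) z) \<in> split_pairs n (z 1) (support_size z)"
    using d(2,3) by (simp add: split_pairs_def)
  then show "z \<in> (\<lambda>(u, w). join_brackets (z 1) u w) ` split_pairs n (z 1) (support_size z)"
    using d(4) by (metis (no_types, lifting) case_prod_conv image_eqI)
qed

lemma strict_brackets_Suc_eq: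
  "{z \<in> strict_brackets (Suc n). support_size z = k}
    = shift_brackets ` {w \<in> strict_brackets n. support_size w = k}
      \<union> (\<Union>m\<in>{1..n}. (\<lambda>(u, w). join_brackets m u w) ` split_pairs n m k)"
  (is "?L = ?A \<union> ?B")
proof (intro equalityI subsetI)
  fix z assume "z \<in> ?L"
  then have z: "z \<in> strict_brackets (Suc n)" and k: "support_size z = k" by auto
  show "z \<in> ?A \<union> ?B"
  proof (cases "z 1 = 0")
    case True
    note d = decompose_unused_first[OF z True]
    have "window 1 n z \<in> {w \<in> strict_brackets n. support_size w = k}"
      using d k support_size_shift[OF d(1)] by simp
    then have "shift_brackets (window 1 n z) \<in> ?A" by (rule imageI)
    then show ?thesis using d(2) by simp
  next
    case False
    then show ?thesis using join_split_pairs[OF z] k by blast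
  qed
next
  fix z assume "z \<in> ?A \<union> ?B"
  then show "z \<in> ?L"
  proof
    assume "z \<in> ?A"
    then obtain w where "w \<in> strict_brackets n" "support_size w = k" "z = shift_brackets w" by blast
    then show ?thesis using shift_brackets_in_strict_brackets support_size_shift by simp
  next
    assume "z \<in> ?B"
    then obtain m u w where "m \<in> {1..n}" "u \<in> strict_brackets (m - 1)" "w \<in> strict_brackets (n - m)"
      "Suc (support_size u + support_size w) = k" "z = join_brackets m u w"
      by (auto simp: split_pairs_def)
    then show ?thesis using join_brackets_in_strict_brackets[of u m w n] support_size_join[of u m w n] by simp
  qed
qed

lemma inj_on_join_brackets:
  assumes "0 < m"
  shows "inj_on (\<lambda>(u, w). join_brackets m u w) (split_pairs n m k)"
proof (rule inj_onI)
  fix p p' assume p: "p \<in> split_pairs n m k" "p' \<in> split_pairs n m k"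
    and eq: "(\<lambda>(u, w). join_brackets m u w) p = (\<lambda>(u, w). join_brackets m u w) p'"
  obtain u w u' w' where pp: "p = (u, w)" "p' = (u', w')" by fastforce
  have "window 1 (m - 1) (join_brackets m u w) = window 1 (m - 1) (join_brackets m u' w')"
    "window (Suc m) (n - m) (join_brackets m u w) = window (Suc m) (n - m) (join_brackets m u' w')"
    using eq pp by simp_all
  then show "p = p'"
    using window_join_brackets[OF _ _ assms, of u w n] window_join_brackets[OF _ _ assms, of u' w' n] p pp
    by (simp add: split_pairs_def)
qed

lemma strict_count_Suc:
  "strict_count (Suc n) k = strict_count n k + (\<Sum>m\<in>{1..n}. card (split_pairs n m k))"
proof -
  let ?A = "shift_brackets ` {w \<in> strict_brackets n. support_size w = k}"
  let ?B = "\<lambda>m. (\<lambda>(u, w). join_brackets m u w) ` split_pairs n m k"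
  have fin: "finite ?A" "\<And>m. finite (?B m)"
    using finite_strict_brackets by (auto simp: split_pairs_def)
  have "inj_on shift_brackets {w \<in> strict_brackets n. support_size w = k}"
    by (rule inj_onI) (metis (mono_tags, lifting) mem_Collect_eq window_shift_brackets)
  then have cA: "card ?A = strict_count n k" by (simp add: strict_count_def card_image)
  have cB: "card (?B m) = card (split_pairs n m k)" if "m \<in> {1..n}" for m
    using inj_on_join_brackets[of m n k] that by (simp add: card_image)
  have first: "z 1 = m" if "z \<in> ?B m" for z m using that by (auto simp: join_brackets_def)
  have disjB: "?B m \<inter> ?B m' = {}" if "m \<noteq> m'" for m m'
  proof (rule equals0I)
    fix z assume "z \<in> ?B m \<inter> ?B m'"
    then show False using first[of z m] first[of z m'] that by simp
  qed
  have disjAB: "?A \<inter> (\<Union>m\<in>{1..n}. ?B m) = {}"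
  proof (rule equals0I)
    fix z assume z: "z \<in> ?A \<inter> (\<Union>m\<in>{1..n}. ?B m)"
    then obtain m where "m \<in> {1..n}" "z \<in> ?B m" by blast
    moreover have "z 1 = 0" using z by (auto simp: shift_brackets_def)
    ultimately show False using first[of z m] by simp
  qed
  have "strict_count (Suc n) k = card (?A \<union> (\<Union>m\<in>{1..n}. ?B m))"
    unfolding strict_count_def by (simp only: strict_brackets_Suc_eq)
  also have "\<dots> = card ?A + card (\<Union>m\<in>{1..n}. ?B m)"
    using fin disjAB by (intro card_Un_disjoint) auto
  also have "card (\<Union>m\<in>{1..n}. ?B m) = (\<Sum>m\<in>{1..n}. card (?B m))"
    using fin disjB by (intro card_UN_disjoint) auto
  finally show ?thesis using cA cB by simp
qed

lemma strict_count_0: "strict_count 0 k = (if k = 0 then 1 else 0)"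
proof -
  have "z = (\<lambda>_. 0)" if "z \<in> strict_brackets 0" for z
    using strict_brackets_zero[OF that] by (auto intro!: ext)
  moreover have "(\<lambda>_. 0) \<in> strict_brackets 0" by (rule strict_bracketsI) (auto simp: laminar_def)
  ultimately have "strict_brackets 0 = {\<lambda>_. 0}" by blast
  then have "{z \<in> strict_brackets 0. support_size z = k} = (if k = 0 then {\<lambda>_. 0} else {})"
    by (auto simp: support_size_def)
  then show ?thesis by (simp add: strict_count_def)
qed

lemma sum_choose_mult_choose:
  "(\<Sum>j\<le>M. (j choose p) * ((M - j) choose r)) = Suc M choose (p + r + 1)"
proof (induction r arbitrary: M)
  case 0
  then show ?case using sum_choose_upper[of p M] by simp
next
  case (Suc r)
  note IH_r = Suc.IH
  show ?case
  proof (induction M)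
    case (Suc M)
    have "(\<Sum>j\<le>Suc M. (j choose p) * ((Suc M - j) choose Suc r))
        = (\<Sum>j\<le>M. (j choose p) * ((Suc M - j) choose Suc r))"
      by (simp add: sum.atMost_Suc)
    also have "\<dots> = (\<Sum>j\<le>M. (j choose p) * ((M - j) choose r) + (j choose p) * ((M - j) choose Suc r))"
      by (intro sum.cong refl) (simp add: Suc_diff_le algebra_simps)
    also have "\<dots> = (Suc M choose (p + r + 1)) + (Suc M choose (p + Suc r + 1))"
      by (simp only: sum.distrib IH_r Suc.IH)
    finally show ?case by simp
  qed simp
qed

lemma sum_choose_pred_mult_choose:
  "(\<Sum>m\<in>{1..n}. ((m - 1) choose p) * ((n - m) choose r)) = n choose (p + r + 1)"
proof (cases n)
  case (Suc M)
  have "(\<Sum>m\<in>{1..Suc M}. ((m - 1) choose p) * ((Suc M - m) choose r))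
      = (\<Sum>j\<in>{0..M}. ((Suc j - 1) choose p) * ((Suc M - Suc j) choose r))"
    by (subst sum.shift_bounds_cl_Suc_ivl[symmetric]) simp
  then show ?thesis
    using sum_choose_mult_choose[where M = M and p = p and r = r] Suc by (simp add: atLeast0AtMost)
qed simp

definition motzkin_coeff :: "nat \<Rightarrow> nat \<Rightarrow> nat" where
  "motzkin_coeff n k = (n choose (2 * k)) * catalan k"

lemma motzkin_coeff_Suc_Suc:
  "motzkin_coeff (Suc n) (Suc k) = motzkin_coeff n (Suc k)
    + (\<Sum>m\<in>{1..n}. \<Sum>i\<le>k. motzkin_coeff (m - 1) i * motzkin_coeff (n - m) (k - i))"
proof -
  have "(\<Sum>m\<in>{1..n}. \<Sum>i\<le>k. motzkin_coeff (m - 1) i * motzkin_coeff (n - m) (k - i))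
      = (\<Sum>i\<le>k. catalan i * catalan (k - i) * (\<Sum>m\<in>{1..n}. ((m - 1) choose (2 * i)) * ((n - m) choose (2 * (k - i)))))"
    by (subst sum.swap) (simp add: motzkin_coeff_def sum_distrib_left algebra_simps)
  also have "\<dots> = (\<Sum>i\<le>k. catalan i * catalan (k - i) * (n choose (2 * k + 1)))"
  proof (intro sum.cong refl)
    fix i assume "i \<in> {..k}"
    then have "2 * i + 2 * (k - i) + 1 = 2 * k + 1" by simp
    then show "catalan i * catalan (k - i) * (\<Sum>m\<in>{1..n}. ((m - 1) choose (2 * i)) * ((n - m) choose (2 * (k - i))))
        = catalan i * catalan (k - i) * (n choose (2 * k + 1))"
      using sum_choose_pred_mult_choose[where n = n and p = "2 * i" and r = "2 * (k - i)"] by simp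
  qed
  also have "\<dots> = catalan (Suc k) * (n choose (2 * k + 1))"
    by (simp add: sum_distrib_right[symmetric] catalan_convolution)
  finally show ?thesis
    by (simp add: motzkin_coeff_def algebra_simps numeral_2_eq_2)
qed

lemma strict_count_eq_motzkin_coeff: "strict_count n k = motzkin_coeff n k"
proof (induction n arbitrary: k rule: less_induct)
  case (less n)
  show ?case
  proof (cases n)
    case 0
    then show ?thesis by (simp add: strict_count_0 motzkin_coeff_def catalan_def)
  next
    case (Suc n')
    have IH: "strict_count j i = motzkin_coeff j i" if "j \<le> n'" for j i
      using less.IH[of j i] that Suc by simp
    show ?thesis
    proof (cases k)
      case 0
      then show ?thesis
        using strict_count_Suc[of n' 0] IH[of n' 0] Suc by (simp add: motzkin_coeff_def catalan_def split_pairs_def)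
    next
      case (Suc j)
      have "card (split_pairs n' m (Suc j))
        = (\<Sum>i\<le>j. motzkin_coeff (m - 1) i * motzkin_coeff (n' - m) (j - i))" if "m \<in> {1..n'}" for m
      proof -
        have "m - 1 \<le> n'" "n' - m \<le> n'" using that by auto
        then show ?thesis
          using card_pairs_sum_eq[OF finite_strict_brackets finite_strict_brackets,
              where f = support_size and g = support_size and j = j]
            IH[of "m - 1"] IH[of "n' - m"]
          by (simp add: strict_count_def split_pairs_def)
      qed
      then show ?thesis
        using strict_count_Suc[of n' "Suc j"] IH[of n'] motzkin_coeff_Suc_Suc[of n' j] \<open>n = Suc n'\<close> Suc
        by simp
    qed
  qed
qed

lemma Pop_image_brackets: "Pop (brackets (Suc n)) (\<le>) ` brackets (Suc n) = strict_brackets n"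
  using Pop_brackets pop_brackets_image by (metis (no_types, lifting) image_cong)

lemma sum_strict_brackets_by_support_size:
  fixes f :: "nat \<Rightarrow> 'a :: comm_semiring_1"
  shows "(\<Sum>z\<in>strict_brackets n. f (support_size z)) = (\<Sum>k\<le>n. of_nat (motzkin_coeff n k) * f k)"
proof -
  have "(\<Sum>z\<in>strict_brackets n. f (support_size z))
      = (\<Sum>k\<le>n. \<Sum>z\<in>{z \<in> strict_brackets n. support_size z = k}. f (support_size z))"
    by (rule sum.group[symmetric]) (use finite_strict_brackets support_size_le in auto)
  also have "\<dots> = (\<Sum>k\<le>n. of_nat (strict_count n k) * f k)"
    by (intro sum.cong refl) (simp add: strict_count_def)
  finally show ?thesis by (simp add: strict_count_eq_motzkin_coeff)
qed

lemma Pop_poly_brackets: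
  "Pop_poly (brackets (Suc n)) (\<le>) q = (\<Sum>k\<le>n. real (motzkin_coeff n k) * q ^ (n - k))"
proof -
  have "card (upcovers (brackets (Suc n)) (\<le>) z) = n - support_size z" if "z \<in> strict_brackets n" for z
    using card_upcovers_brackets[OF subsetD[OF strict_brackets_subset that]] card_growable[OF that] by simp
  then have "Pop_poly (brackets (Suc n)) (\<le>) q = (\<Sum>z\<in>strict_brackets n. q ^ (n - support_size z))"
    unfolding Pop_poly_def Pop_image_brackets by simp
  then show ?thesis using sum_strict_brackets_by_support_size[where f = "\<lambda>k. q ^ (n - k)"] by simp
qed

lemma card_Pop_image_brackets: "card (Pop (brackets (Suc n)) (\<le>) ` brackets (Suc n)) = motzkin n"
proof -
  have "card (strict_brackets n) = (\<Sum>k\<le>n. motzkin_coeff n k)"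
    using sum_strict_brackets_by_support_size[where f = "\<lambda>_. 1 :: nat"] by simp
  then show ?thesis
    unfolding Pop_image_brackets motzkin_def motzkin_coeff_def .
qed

lemma Tam_iso_brackets:
  "Pop_poly (Tam N) weak_le q = Pop_poly (brackets N) (\<le>) q"
  "card (Pop (Tam N) weak_le ` Tam N) = card (Pop (brackets N) (\<le>) ` brackets N)"
proof -
  have "\<exists>!m. is_glb (brackets N) (\<le>) ({y. covers (brackets N) (\<le>) y x} \<union> {x}) m" if "x \<in> brackets N" for x
    using pop_brackets_is_glb[OF that] is_glb_unique by blast
  note iso = bij_betw_bracket_vector weak_le_iff_bracket_vector_le this
  show "Pop_poly (Tam N) weak_le q = Pop_poly (brackets N) (\<le>) q"
    using Pop_poly_iso[OF iso] by simp
  show "card (Pop (Tam N) weak_le ` Tam N) = card (Pop (brackets N) (\<le>) ` brackets N)"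
    using card_Pop_image_iso[OF iso] by simp
qed

theorem theorem1p2:
  fixes n :: nat and q :: real
  shows "Pop_poly (Tam (n + 1)) weak_le q =
           (\<Sum>k = 0..n div 2. (1 / (real k + 1)) * real ((2 * k) choose k) * real (n choose (2 * k)) * q ^ (n - k))
         \<and> (n \<ge> 1 \<longrightarrow> card (Pop (Tam n) weak_le ` Tam n) = motzkin (n - 1))"
proof
  have coeff: "real (motzkin_coeff n k) = 1 / (real k + 1) * real ((2 * k) choose k) * real (n choose (2 * k))" for k
  proof -
    have "(real k + 1) * real (catalan k) = real ((2 * k) choose k)"
      using arg_cong[OF Suc_times_catalan[of k], of real] by (simp add: algebra_simps)
    then have "real (catalan k) = real ((2 * k) choose k) / (real k + 1)"
      by (simp add: eq_divide_eq mult.commute)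
    then show ?thesis by (simp add: motzkin_coeff_def)
  qed
  have "Pop_poly (Tam (n + 1)) weak_le q = (\<Sum>k\<le>n. real (motzkin_coeff n k) * q ^ (n - k))"
    using Tam_iso_brackets(1) Pop_poly_brackets by simp
  also have "\<dots> = (\<Sum>k = 0..n div 2. real (motzkin_coeff n k) * q ^ (n - k))"
    by (rule sum.mono_neutral_right) (auto simp: motzkin_coeff_def)
  finally show "Pop_poly (Tam (n + 1)) weak_le q =
      (\<Sum>k = 0..n div 2. (1 / (real k + 1)) * real ((2 * k) choose k) * real (n choose (2 * k)) * q ^ (n - k))"
    by (simp add: coeff)
  show "n \<ge> 1 \<longrightarrow> card (Pop (Tam n) weak_le ` Tam n) = motzkin (n - 1)"
    using Tam_iso_brackets(2)[of n] card_Pop_image_brackets[of "n - 1"] by (cases n) auto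
qed

end
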